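(* Let $\mathcal{H}$ be a complex Hilbert space and let $T\in\mathcal{B}(\mathcal{H})$ be a $\Delta_T$-regular completely hyperexpansive operator. For $n\ge1$ let $A_n(T)=-\sum_{j=0}^n(-1)^j\binom{n}{j}T^{*j}T^j\ (\ge0)$. The following statements are equivalent: (i) $T$ is $A_n(T)$-regular for every integer $n\ge2$; (ii) $T$ is $A_j(T)$-regular for $j=2,3$; (iii) $T$ is $A_2(T)$-regular and the compression $P_{\overline{A_2(T)\mathcal{H}}}T|_{\overline{A_2(T)\mathcal{H}}}$ of $T$ to $\overline{A_2(T)\mathcal{H}}$ is a quasinormal contraction. In addition, if one of (i)–(iii) holds, then $\mathcal{N}(A_2(T))=\mathcal{N}(A_n(T))$ for all $n\ge3$.
   Context: $\Delta_T=T^*T-I$ (so $A_1(T)=\Delta_T$). $T$ is completely hyperexpansive if $\sum_{j=0}^n(-1)^j\binom{n}{j}T^{*j}T^j\le0$ for all $n\ge1$. For a positive operator $A$, $T$ is $A$-regular if $AT=A^{1/2}TA^{1/2}$. An operator $Q$ is quasinormal if $QQ^*Q=Q^*Q^2$. *)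

theory Defs
  imports "HOL-Analysis.Analysis"
begin

class complex_vector = real_vector +
  fixes scaleC :: "complex \<Rightarrow> 'a \<Rightarrow> 'a"
  assumes scaleC_add_right: "scaleC a (x + y) = scaleC a x + scaleC a y"
    and scaleC_add_left: "scaleC (a + b) x = scaleC a x + scaleC b x"
    and scaleC_scaleC: "scaleC a (scaleC b x) = scaleC (a * b) x"
    and scaleC_one: "scaleC 1 x = x"
    and scaleR_scaleC: "scaleR r x = scaleC (complex_of_real r) x"

class complex_normed_vector = complex_vector + real_normed_vector +
  assumes norm_scaleC: "norm (scaleC a x) = cmod a * norm x"

text \<open>Inner product, conjugate-linear in the first and linear in the second argument.\<close>
class complex_inner = complex_normed_vector +
  fixes cinner :: "'a \<Rightarrow> 'a \<Rightarrow> complex"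
  assumes cinner_commute: "cinner x y = cnj (cinner y x)"
    and cinner_add_left: "cinner (x + y) z = cinner x z + cinner y z"
    and cinner_scaleC_left: "cinner (scaleC r x) y = cnj r * cinner x y"
    and cinner_self_real: "Im (cinner x x) = 0"
    and cinner_self_nonneg: "0 \<le> Re (cinner x x)"
    and cinner_self_eq_zero: "cinner x x = 0 \<longleftrightarrow> x = 0"
    and norm_eq_sqrt_cinner: "norm x = sqrt (Re (cinner x x))"

class chilbert_space = complex_inner + complete_space

instantiation complex :: complex_vector
begin
definition scaleC_complex_def: "scaleC a (x::complex) = a * x"
instance by standard (auto simp: scaleC_complex_def algebra_simps scaleR_conv_of_real)
end

instance complex :: complex_normed_vector
  by standard (simp add: scaleC_complex_def norm_mult)

instantiation complex :: complex_inner
begin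
definition cinner_complex_def: "cinner (x::complex) y = cnj x * y"
instance
  by standard (auto simp: cinner_complex_def scaleC_complex_def algebra_simps complex_norm_square
      cmod_def power2_eq_square)
end

instance complex :: chilbert_space ..

definition clinear :: "('a::complex_vector \<Rightarrow> 'b::complex_vector) \<Rightarrow> bool" where
  "clinear f \<longleftrightarrow> (\<forall>x y. f (x + y) = f x + f y) \<and> (\<forall>c x. f (scaleC c x) = scaleC c (f x))"

definition cbounded :: "('a::complex_normed_vector \<Rightarrow> 'b::complex_normed_vector) \<Rightarrow> bool" where
  "cbounded f \<longleftrightarrow> clinear f \<and> (\<exists>K. \<forall>x. norm (f x) \<le> norm x * K)"

definition cadjoint :: "('a::chilbert_space \<Rightarrow> 'a) \<Rightarrow> ('a \<Rightarrow> 'a)" where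
  "cadjoint T = (THE S. \<forall>x y. cinner (T x) y = cinner x (S y))"

definition positive_op :: "('a::chilbert_space \<Rightarrow> 'a) \<Rightarrow> bool" where
  "positive_op A \<longleftrightarrow> cbounded A \<and> (\<forall>x. Im (cinner (A x) x) = 0 \<and> 0 \<le> Re (cinner (A x) x))"

definition op_le :: "('a::chilbert_space \<Rightarrow> 'a) \<Rightarrow> ('a \<Rightarrow> 'a) \<Rightarrow> bool" where
  "op_le A B \<longleftrightarrow> cbounded A \<and> cbounded B \<and> positive_op (\<lambda>x. B x - A x)"

definition op_sqrt :: "('a::chilbert_space \<Rightarrow> 'a) \<Rightarrow> ('a \<Rightarrow> 'a)" where
  "op_sqrt A = (THE B. positive_op B \<and> B \<circ> B = A)"

definition regular :: "('a::chilbert_space \<Rightarrow> 'a) \<Rightarrow> ('a \<Rightarrow> 'a) \<Rightarrow> bool" where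
  "regular A T \<longleftrightarrow> A \<circ> T = op_sqrt A \<circ> T \<circ> op_sqrt A"

definition hyp_sum :: "('a::chilbert_space \<Rightarrow> 'a) \<Rightarrow> nat \<Rightarrow> ('a \<Rightarrow> 'a)" where
  "hyp_sum T n = (\<lambda>x. \<Sum>j = 0..n. scaleR ((-1) ^ j * real (n choose j)) ((cadjoint T ^^ j) ((T ^^ j) x)))"

text \<open>\<open>A\<^sub>n(T) = - \<Sum>\<^sub>j\<^sub>=\<^sub>0\<^sup>n (-1)\<^sup>j (n choose j) T\<^sup>*\<^sup>j T\<^sup>j\<close>; in particular \<open>A\<^sub>1(T) = T\<^sup>*T - I = \<Delta>\<^sub>T\<close>.\<close>
definition A_op :: "('a::chilbert_space \<Rightarrow> 'a) \<Rightarrow> nat \<Rightarrow> ('a \<Rightarrow> 'a)" where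
  "A_op T n = (\<lambda>x. - hyp_sum T n x)"

definition Delta :: "('a::chilbert_space \<Rightarrow> 'a) \<Rightarrow> ('a \<Rightarrow> 'a)" where
  "Delta T = (\<lambda>x. cadjoint T (T x) - x)"

definition completely_hyperexpansive :: "('a::chilbert_space \<Rightarrow> 'a) \<Rightarrow> bool" where
  "completely_hyperexpansive T \<longleftrightarrow> cbounded T \<and> (\<forall>n\<ge>1. op_le (hyp_sum T n) (\<lambda>_. 0))"

definition kernel :: "('a::chilbert_space \<Rightarrow> 'a) \<Rightarrow> 'a set" where
  "kernel A = {x. A x = 0}"

definition orth_proj :: "'a::chilbert_space set \<Rightarrow> 'a \<Rightarrow> 'a" where
  "orth_proj M x = (THE y. y \<in> M \<and> (\<forall>z\<in>M. cinner z (x - y) = 0))"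

text \<open>Compression \<open>P\<^sub>M T|\<^sub>M\<close>, an operator on \<open>M\<close> (values off \<open>M\<close> are irrelevant and set to 0).\<close>
definition compression :: "'a::chilbert_space set \<Rightarrow> ('a \<Rightarrow> 'a) \<Rightarrow> ('a \<Rightarrow> 'a)" where
  "compression M T = (\<lambda>x. if x \<in> M then orth_proj M (T x) else 0)"

text \<open>Adjoint of an operator \<open>S : M \<rightarrow> M\<close> in the Hilbert space \<open>M\<close> (extended by 0 off \<open>M\<close>).\<close>
definition adjoint_on :: "'a::chilbert_space set \<Rightarrow> ('a \<Rightarrow> 'a) \<Rightarrow> ('a \<Rightarrow> 'a)" where
  "adjoint_on M S = (THE S'. (\<forall>x. x \<notin> M \<longrightarrow> S' x = 0) \<and> (\<forall>x\<in>M. S' x \<in> M) \<and>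
                         (\<forall>x\<in>M. \<forall>y\<in>M. cinner (S x) y = cinner x (S' y)))"

definition quasinormal_on :: "'a::chilbert_space set \<Rightarrow> ('a \<Rightarrow> 'a) \<Rightarrow> bool" where
  "quasinormal_on M S \<longleftrightarrow> (\<forall>x\<in>M. S (adjoint_on M S (S x)) = adjoint_on M S (S (S x)))"

definition contraction_on :: "'a::chilbert_space set \<Rightarrow> ('a \<Rightarrow> 'a) \<Rightarrow> bool" where
  "contraction_on M S \<longleftrightarrow> (\<forall>x\<in>M. norm (S x) \<le> norm x)"

end

theory Submission
  imports Defs
begin

text \<open>For a completely hyperexpansive \<open>T\<close> every \<open>A\<^sub>n = A\<^sub>n(T)\<close>, \<open>n \<ge> 1\<close>, is positive and
  \<open>A\<^sub>n\<^sub>+\<^sub>1 = A\<^sub>n - T\<^sup>* A\<^sub>n T\<close>. A telescoping argument on the forms \<open>\<langle>A\<^sub>n T\<^sup>k x, T\<^sup>k x\<rangle>\<close> shows that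
  all \<open>A\<^sub>n\<close> with \<open>n \<ge> 2\<close> have the same kernel, hence the same closed range \<open>M\<close>.

  For a positive \<open>A\<close> with \<open>P\<close> the projection onto \<open>closure (range A)\<close>, \<open>T\<close> is \<open>A\<close>-regular iff
  \<open>ker A\<close> is \<open>T\<close>-invariant and \<open>A\<close> commutes with \<open>U = P T P\<close>. Under this invariance
  \<open>A\<^sub>n\<^sub>+\<^sub>1 = A\<^sub>n - U\<^sup>* A\<^sub>n U\<close>, so if \<open>A\<^sub>2\<close> commutes with \<open>U\<close>, then \<open>A\<^sub>3\<close> does iff
  \<open>A\<^sub>2 (U U\<^sup>* U - U\<^sup>* U\<^sup>2) = 0\<close>, i.e. iff \<open>U\<close> is quasinormal on \<open>M\<close> (\<open>A\<^sub>2\<close> is injective on \<open>M\<close>);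
  by induction quasinormality then propagates commutation to every \<open>A\<^sub>n\<close>. Finally \<open>U\<close> is a
  contraction on \<open>M\<close> because \<open>A\<^sub>3 \<ge> 0\<close> gives \<open>\<parallel>A\<^sub>2\<^sup>1\<^sup>/\<^sup>2 T x\<parallel> \<le> \<parallel>A\<^sub>2\<^sup>1\<^sup>/\<^sup>2 x\<parallel>\<close> and
  \<open>A\<^sub>2\<^sup>1\<^sup>/\<^sup>2 T = P T A\<^sub>2\<^sup>1\<^sup>/\<^sup>2\<close>.\<close>

section \<open>Complex inner product spaces\<close>

lemma scaleC_zero_right [simp]: "scaleC a 0 = (0::'a::complex_vector)"
  using scaleC_add_right[of a 0 0] by simp

lemma scaleC_minus_right: "scaleC a (- x) = - scaleC a (x::'a::complex_vector)"
  using minus_unique[of "scaleC a x" "scaleC a (- x)"] scaleC_add_right[of a x "- x"] by simp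

lemma scaleC_diff_right: "scaleC a (x - y) = scaleC a x - scaleC a (y::'a::complex_vector)"
  using scaleC_add_right[of a x "- y"] by (simp add: scaleC_minus_right)

lemma scaleC_zero_left [simp]: "scaleC 0 x = (0::'a::complex_vector)"
  using scaleC_add_left[of 0 0 x] by simp

lemma scaleC_minus_left: "scaleC (- a) x = - scaleC a (x::'a::complex_vector)"
  using minus_unique[of "scaleC a x" "scaleC (- a) x"] scaleC_add_left[of a "- a" x] by simp

lemma scaleC_scaleR_commute: "scaleC c (scaleR r x) = scaleR r (scaleC c (x::'a::complex_vector))"
  by (simp add: scaleR_scaleC scaleC_scaleC mult.commute)

lemma scaleC_sum_right: "scaleC c (\<Sum>i\<in>I. f i) = (\<Sum>i\<in>I. scaleC c (f i :: 'a::complex_vector))"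
  by (induction I rule: infinite_finite_induct) (auto simp: scaleC_add_right)

lemma bounded_linear_scaleC: "bounded_linear (\<lambda>x::'a::complex_normed_vector. scaleC c x)"
  by (rule bounded_linear_intro[where K="cmod c"])
    (auto simp: scaleC_add_right scaleC_scaleR_commute norm_scaleC)

lemma cinner_add_right: "cinner x (y + z) = cinner x y + cinner x z"
  using cinner_commute[of x "y + z"] cinner_commute[of y x] cinner_commute[of z x]
  by (simp add: cinner_add_left)

lemma cinner_scaleC_right: "cinner x (scaleC r y) = r * cinner x y"
  using cinner_commute[of x "scaleC r y"] cinner_commute[of y x] by (simp add: cinner_scaleC_left)

lemma cinner_zero_left [simp]: "cinner 0 x = 0"
  using cinner_add_left[of 0 0 x] by simp

lemma cinner_zero_right [simp]: "cinner x 0 = 0"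
  using cinner_add_right[of x 0 0] by simp

lemma cinner_minus_left: "cinner (- x) y = - cinner x y"
  using minus_unique[of "cinner x y" "cinner (- x) y"] cinner_add_left[of x "- x" y] by simp

lemma cinner_minus_right: "cinner x (- y) = - cinner x y"
  using minus_unique[of "cinner x y" "cinner x (- y)"] cinner_add_right[of x y "- y"] by simp

lemma cinner_diff_left: "cinner (x - y) z = cinner x z - cinner y z"
  using cinner_add_left[of x "- y" z] by (simp add: cinner_minus_left)

lemma cinner_diff_right: "cinner x (y - z) = cinner x y - cinner x z"
  using cinner_add_right[of x y "- z"] by (simp add: cinner_minus_right)

lemma cinner_scaleR_left: "cinner (scaleR r x) y = of_real r * cinner x y"
  by (simp add: scaleR_scaleC cinner_scaleC_left)

lemma cinner_scaleR_right: "cinner x (scaleR r y) = of_real r * cinner x y"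
  by (simp add: scaleR_scaleC cinner_scaleC_right)

lemma cinner_sum_left: "cinner (\<Sum>i\<in>I. f i) y = (\<Sum>i\<in>I. cinner (f i) y)"
  by (induction I rule: infinite_finite_induct) (auto simp: cinner_add_left)

lemma cinner_sum_right: "cinner y (\<Sum>i\<in>I. f i) = (\<Sum>i\<in>I. cinner y (f i))"
  by (induction I rule: infinite_finite_induct) (auto simp: cinner_add_right)

lemma cinner_self_eq_norm_sq: "cinner x x = complex_of_real ((norm x)\<^sup>2)"
  using cinner_self_real[of x] cinner_self_nonneg[of x]
  by (simp add: norm_eq_sqrt_cinner complex_eq_iff)

lemma Re_cinner_self: "Re (cinner x x) = (norm x)\<^sup>2"
  by (simp add: cinner_self_eq_norm_sq)

lemma Re_cinner_commute: "Re (cinner x y) = Re (cinner y x)"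
  by (subst cinner_commute) simp

lemma norm_add_square: "(norm (x + y))\<^sup>2 = (norm x)\<^sup>2 + (norm y)\<^sup>2 + 2 * Re (cinner x y)"
proof -
  have "(norm (x + y))\<^sup>2 = Re (cinner (x + y) (x + y))" by (simp add: Re_cinner_self)
  also have "\<dots> = Re (cinner x x) + Re (cinner y y) + Re (cinner x y) + Re (cinner y x)"
    by (simp add: cinner_add_left cinner_add_right)
  finally show ?thesis by (simp add: Re_cinner_self Re_cinner_commute[of y x])
qed

lemma norm_diff_square: "(norm (x - y))\<^sup>2 = (norm x)\<^sup>2 + (norm y)\<^sup>2 - 2 * Re (cinner x y)"
proof -
  have "(norm (x - y))\<^sup>2 = Re (cinner (x - y) (x - y))" by (simp add: Re_cinner_self)
  also have "\<dots> = Re (cinner x x) + Re (cinner y y) - Re (cinner x y) - Re (cinner y x)"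
    by (simp add: cinner_diff_left cinner_diff_right)
  finally show ?thesis by (simp add: Re_cinner_self Re_cinner_commute[of y x])
qed

lemma all_cinner_eq_zero_iff: "(\<forall>z. cinner z x = 0) \<longleftrightarrow> x = 0"
  by (metis cinner_zero_right cinner_self_eq_zero)

lemma cinner_eqI: "(\<And>z. cinner z x = cinner z y) \<Longrightarrow> x = y"
  using all_cinner_eq_zero_iff[of "x - y"] by (simp add: cinner_diff_right)

lemma Cauchy_Schwarz_cinner: "cmod (cinner x y) \<le> norm x * norm y"
proof (cases "y = 0")
  case False
  then have ny: "norm y > 0" by simp
  define c where "c = cinner y x / complex_of_real ((norm y)\<^sup>2)"
  have "0 \<le> Re (cinner (x - scaleC c y) (x - scaleC c y))" by (rule cinner_self_nonneg)
  also have "cinner (x - scaleC c y) (x - scaleC c y)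
     = cinner x x - c * cinner x y - cnj c * cinner y x + cnj c * c * cinner y y"
    by (simp add: cinner_diff_left cinner_diff_right cinner_scaleC_left cinner_scaleC_right
        algebra_simps)
  also have "cnj c * c * cinner y y = cnj c * cinner y x"
  proof -
    have "c * cinner y y = cinner y x"
      using ny by (simp add: c_def cinner_self_eq_norm_sq)
    then show ?thesis by (simp add: mult.assoc)
  qed
  also have "c * cinner x y = complex_of_real ((cmod (cinner x y))\<^sup>2 / (norm y)\<^sup>2)"
  proof -
    have "cinner y x * cinner x y = complex_of_real ((cmod (cinner x y))\<^sup>2)"
      using complex_norm_square[of "cinner x y"] cinner_commute[of y x]
      by (simp only: mult.commute)
    then show ?thesis by (simp add: c_def)
  qed
  finally have "0 \<le> (norm x)\<^sup>2 - (cmod (cinner x y))\<^sup>2 / (norm y)\<^sup>2"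
    by (simp add: cinner_self_eq_norm_sq)
  then have "(cmod (cinner x y))\<^sup>2 \<le> (norm x)\<^sup>2 * (norm y)\<^sup>2"
    using ny by (simp add: field_simps)
  then have "(cmod (cinner x y))\<^sup>2 \<le> (norm x * norm y)\<^sup>2"
    by (simp add: power_mult_distrib)
  then show ?thesis by (rule power2_le_imp_le) simp
qed simp

lemma bounded_bilinear_cinner: "bounded_bilinear cinner"
proof
  fix a a' b b' :: 'a and r :: real
  show "cinner (a + a') b = cinner a b + cinner a' b" by (rule cinner_add_left)
  show "cinner a (b + b') = cinner a b + cinner a b'" by (rule cinner_add_right)
  show "cinner (scaleR r a) b = scaleR r (cinner a b)"
    by (simp add: cinner_scaleR_left scaleR_conv_of_real)
  show "cinner a (scaleR r b) = scaleR r (cinner a b)"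
    by (simp add: cinner_scaleR_right scaleR_conv_of_real)
  show "\<exists>K. \<forall>a b :: 'a. norm (cinner a b) \<le> norm a * norm b * K"
    by (rule exI[of _ 1]) (simp add: Cauchy_Schwarz_cinner)
qed

lemmas tendsto_cinner [tendsto_intros] = bounded_bilinear.tendsto[OF bounded_bilinear_cinner]
lemmas continuous_on_cinner [continuous_intros] =
  bounded_bilinear.continuous_on[OF bounded_bilinear_cinner]

subclass (in chilbert_space) banach ..

section \<open>Bounded operators\<close>

lemma clinear_add: "clinear f \<Longrightarrow> f (x + y) = f x + f y"
  by (simp add: clinear_def)

lemma clinear_scaleC: "clinear f \<Longrightarrow> f (scaleC c x) = scaleC c (f x)"
  by (simp add: clinear_def)

lemma clinear_zero: "clinear f \<Longrightarrow> f 0 = 0"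
  using clinear_add[of f 0 0] by simp

lemma clinear_minus: "clinear f \<Longrightarrow> f (- x) = - f x"
  using clinear_add[of f x "- x"] clinear_zero[of f] by (metis neg_eq_iff_add_eq_0 add.commute)

lemma clinear_diff: "clinear f \<Longrightarrow> f (x - y) = f x - f y"
  using clinear_add[of f x "- y"] clinear_minus[of f y] by simp

lemma clinear_scaleR: "clinear f \<Longrightarrow> f (scaleR r x) = scaleR r (f x)"
  by (simp add: scaleR_scaleC clinear_scaleC)

lemma clinear_sum: "clinear f \<Longrightarrow> f (\<Sum>i\<in>I. g i) = (\<Sum>i\<in>I. f (g i))"
  by (induction I rule: infinite_finite_induct) (auto simp: clinear_zero clinear_add)

lemma cbounded_clinear: "cbounded f \<Longrightarrow> clinear f"
  by (simp add: cbounded_def)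

lemma cboundedI:
  assumes "clinear f" and "\<And>x. norm (f x) \<le> norm x * K"
  shows "cbounded f"
  using assms unfolding cbounded_def by blast

lemma cbounded_bounded_linear: "cbounded f \<Longrightarrow> bounded_linear f"
  unfolding cbounded_def
  by (auto intro!: bounded_linear_intro simp: clinear_add clinear_scaleR)

lemma cbounded_pos_bound:
  assumes "cbounded f"
  obtains K where "K > 0" and "\<And>x. norm (f x) \<le> norm x * K"
  using bounded_linear.pos_bounded[OF cbounded_bounded_linear[OF assms]] by blast

lemma cbounded_continuous_on: "cbounded f \<Longrightarrow> continuous_on S f"
  by (intro linear_continuous_on cbounded_bounded_linear)

lemma cbounded_tendsto: "cbounded f \<Longrightarrow> (g \<longlongrightarrow> a) F \<Longrightarrow> ((\<lambda>x. f (g x)) \<longlongrightarrow> f a) F"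
  using bounded_linear.tendsto[OF cbounded_bounded_linear] by blast

lemma cbounded_ident: "cbounded (\<lambda>x. x)"
  by (rule cboundedI[where K=1]) (auto simp: clinear_def)

lemma cbounded_compose:
  assumes "cbounded f" and "cbounded g"
  shows "cbounded (\<lambda>x. f (g x))"
proof -
  obtain K where K: "K > 0" "\<And>x. norm (f x) \<le> norm x * K"
    using cbounded_pos_bound[OF assms(1)] by blast
  obtain L where L: "L > 0" "\<And>x. norm (g x) \<le> norm x * L"
    using cbounded_pos_bound[OF assms(2)] by blast
  have "norm (f (g x)) \<le> norm x * (L * K)" for x
  proof -
    have "norm (f (g x)) \<le> norm (g x) * K" by (rule K(2))
    also have "\<dots> \<le> norm x * L * K" using L(2) K(1) by (intro mult_right_mono) auto
    finally show ?thesis by (simp add: mult.assoc)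
  qed
  with assms show ?thesis
    by (intro cboundedI) (auto simp: clinear_def cbounded_def)
qed

lemma cbounded_add:
  assumes "cbounded f" and "cbounded g"
  shows "cbounded (\<lambda>x. f x + g x)"
proof -
  obtain K where K: "\<And>x. norm (f x) \<le> norm x * K"
    using cbounded_pos_bound[OF assms(1)] by blast
  obtain L where L: "\<And>x. norm (g x) \<le> norm x * L"
    using cbounded_pos_bound[OF assms(2)] by blast
  have "norm (f x + g x) \<le> norm x * (K + L)" for x
    using norm_triangle_ineq[of "f x" "g x"] K[of x] L[of x] by (simp add: algebra_simps)
  with assms show ?thesis
    by (intro cboundedI) (auto simp: clinear_def cbounded_def scaleC_add_right)
qed

lemma cbounded_scaleC: "cbounded f \<Longrightarrow> cbounded (\<lambda>x. scaleC c (f x))"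
  by (rule cbounded_compose[of "scaleC c"], rule cboundedI[where K="cmod c"])
    (auto simp: clinear_def scaleC_add_right scaleC_scaleC mult.commute norm_scaleC)

lemma cbounded_scaleR: "cbounded f \<Longrightarrow> cbounded (\<lambda>x. scaleR r (f x))"
  using cbounded_scaleC[of f "complex_of_real r"] by (simp add: scaleR_scaleC)

lemma cbounded_diff:
  assumes "cbounded f" and "cbounded g"
  shows "cbounded (\<lambda>x. f x - g x)"
  using cbounded_add[OF assms(1) cbounded_scaleR[OF assms(2), of "- 1"]] by simp

lemma cbounded_funpow: "cbounded f \<Longrightarrow> cbounded (f ^^ n)"
  for f :: "'a::complex_normed_vector \<Rightarrow> 'a"
  by (induction n) (auto simp: cbounded_ident[unfolded id_def[symmetric]]
      cbounded_compose[unfolded comp_def[symmetric]])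

section \<open>Closed subspaces and orthogonal projections\<close>

definition csubspace :: "'a::complex_vector set \<Rightarrow> bool" where
  "csubspace V \<longleftrightarrow> 0 \<in> V \<and> (\<forall>x\<in>V. \<forall>y\<in>V. x + y \<in> V) \<and> (\<forall>c. \<forall>x\<in>V. scaleC c x \<in> V)"

lemma csubspace_diff: "csubspace V \<Longrightarrow> x \<in> V \<Longrightarrow> y \<in> V \<Longrightarrow> x - y \<in> V"
  unfolding csubspace_def by (metis diff_conv_add_uminus scaleC_minus_left scaleC_one)

lemma csubspace_scaleR: "csubspace V \<Longrightarrow> x \<in> V \<Longrightarrow> scaleR r x \<in> V"
  unfolding csubspace_def by (simp add: scaleR_scaleC)

lemma csubspace_closure:
  fixes V :: "'a::complex_normed_vector set"
  assumes "csubspace V"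
  shows "csubspace (closure V)"
  unfolding csubspace_def
proof (intro conjI ballI allI)
  show "0 \<in> closure V" using assms closure_subset by (auto simp: csubspace_def)
next
  fix x y assume "x \<in> closure V" "y \<in> closure V"
  then obtain f g where "\<forall>n. f n \<in> V" "f \<longlonglongrightarrow> x" "\<forall>n. g n \<in> V" "g \<longlonglongrightarrow> y"
    unfolding closure_sequential by meson
  with assms show "x + y \<in> closure V"
    unfolding closure_sequential csubspace_def
    by (intro exI[of _ "\<lambda>n. f n + g n"]) (auto intro: tendsto_add)
next
  fix c and x :: 'a assume "x \<in> closure V"
  then obtain f where "\<forall>n. f n \<in> V" "f \<longlonglongrightarrow> x"
    unfolding closure_sequential by blast
  with assms show "scaleC c x \<in> closure V"
    unfolding closure_sequential csubspace_def
    by (intro exI[of _ "\<lambda>n. scaleC c (f n)"]) (auto intro: bounded_linear.tendsto[OF bounded_linear_scaleC])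
qed

lemma csubspace_range: "clinear f \<Longrightarrow> csubspace (range f)"
  unfolding csubspace_def
  by (auto simp: clinear_zero image_iff intro: exI[of _ 0] clinear_add[symmetric] clinear_scaleC[symmetric])

definition orth_compl :: "'a::complex_inner set \<Rightarrow> 'a set" where
  "orth_compl S = {x. \<forall>z\<in>S. cinner z x = 0}"

lemma closed_orth_compl: "closed (orth_compl S)"
proof -
  have "orth_compl S = (\<Inter>z\<in>S. {x. cinner z x = 0})" by (auto simp: orth_compl_def)
  moreover have "closed {x. cinner z x = 0}" for z :: 'a
    by (intro closed_Collect_eq continuous_intros)
  ultimately show ?thesis by auto
qed

lemma parallelogram_law:
  "(norm (a + b))\<^sup>2 + (norm (a - b))\<^sup>2 = 2 * (norm a)\<^sup>2 + 2 * (norm (b::'a::complex_inner))\<^sup>2"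
  by (simp add: norm_add_square norm_diff_square)

lemma minimizing_sequence_Cauchy:
  fixes x :: "'a::complex_inner"
  assumes V: "csubspace V" and d: "\<And>w. w \<in> V \<Longrightarrow> d \<le> (norm (x - w))\<^sup>2"
    and v: "\<And>n. v n \<in> V" "\<And>n. (norm (x - v n))\<^sup>2 < d + 1 / real (Suc n)"
  shows "Cauchy v"
proof (rule metric_CauchyI)
  have dist_v: "(norm (v n - v m))\<^sup>2 \<le> 2 / real (Suc n) + 2 / real (Suc m)" for n m
  proof -
    define mid where "mid = scaleR (1/2) (v n + v m)"
    have "mid \<in> V" using V v(1) by (auto simp: mid_def csubspace_def intro!: csubspace_scaleR)
    then have "d \<le> (norm (x - mid))\<^sup>2" by (rule d)
    moreover have "(x - v n) + (x - v m) = scaleR 2 (x - mid)"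
      by (simp add: mid_def algebra_simps scaleR_2)
    then have "(norm ((x - v n) + (x - v m)))\<^sup>2 = 4 * (norm (x - mid))\<^sup>2"
      by (simp add: power_mult_distrib)
    moreover have "(norm ((x - v n) - (x - v m)))\<^sup>2 = (norm (v n - v m))\<^sup>2"
      using norm_minus_commute[of "v m" "v n"] by simp
    ultimately show ?thesis
      using parallelogram_law[of "x - v n" "x - v m"] v(2)[of n] v(2)[of m] by linarith
  qed
  fix e :: real assume "e > 0"
  then obtain N where N: "inverse (real (Suc N)) < e\<^sup>2 / 4"
    using reals_Archimedean[of "e\<^sup>2 / 4"] by auto
  have "dist (v m) (v n) < e" if "N \<le> m" "N \<le> n" for m n
  proof -
    have "2 / real (Suc m) \<le> 2 / real (Suc N)" "2 / real (Suc n) \<le> 2 / real (Suc N)"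
      using that by (auto simp: frac_le)
    then have "(dist (v m) (v n))\<^sup>2 \<le> 4 * inverse (real (Suc N))"
      using dist_v[of m n] by (simp add: dist_norm inverse_eq_divide)
    also have "\<dots> < e\<^sup>2" using N by simp
    finally have "(dist (v m) (v n))\<^sup>2 < e\<^sup>2" .
    then show ?thesis using \<open>e > 0\<close> by (simp add: power_less_imp_less_base)
  qed
  then show "\<exists>M. \<forall>m\<ge>M. \<forall>n\<ge>M. dist (v m) (v n) < e" by blast
qed

lemma nearest_point_exists:
  fixes x :: "'a::chilbert_space"
  assumes V: "csubspace V" "closed V"
  shows "\<exists>y\<in>V. \<forall>w\<in>V. norm (x - y) \<le> norm (x - w)"
proof -
  define d where "d = (INF w\<in>V. (norm (x - w))\<^sup>2)"
  have V_ne: "V \<noteq> {}" using V by (auto simp: csubspace_def)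
  have bdd: "bdd_below ((\<lambda>w. (norm (x - w))\<^sup>2) ` V)"
    by (rule bdd_belowI2[of _ 0]) simp
  have d_le: "d \<le> (norm (x - w))\<^sup>2" if "w \<in> V" for w
    unfolding d_def using bdd that by (rule cINF_lower)
  have "\<exists>w\<in>V. (norm (x - w))\<^sup>2 < d + 1 / real (Suc n)" for n
    using cINF_less_iff[OF V_ne bdd, of "d + 1 / real (Suc n)"] by (simp add: d_def)
  then obtain v where v: "\<And>n. v n \<in> V" "\<And>n. (norm (x - v n))\<^sup>2 < d + 1 / real (Suc n)"
    by metis
  have "Cauchy v" by (rule minimizing_sequence_Cauchy[OF V(1) d_le v])
  then obtain y where y: "v \<longlonglongrightarrow> y" using Cauchy_convergent_iff convergent_def by blast
  have "y \<in> V" using closed_sequentially[OF V(2)] v(1) y by blast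
  moreover have "(norm (x - y))\<^sup>2 \<le> d"
  proof (rule LIMSEQ_le)
    show "(\<lambda>n. (norm (x - v n))\<^sup>2) \<longlonglongrightarrow> (norm (x - y))\<^sup>2" by (intro tendsto_intros y)
    show "(\<lambda>n. d + 1 / real (Suc n)) \<longlonglongrightarrow> d"
      using tendsto_add[OF tendsto_const LIMSEQ_inverse_real_of_nat, of d]
      by (simp add: inverse_eq_divide)
  qed (use v(2) less_imp_le in blast)
  ultimately show ?thesis
    using d_le by (blast intro: power2_le_imp_le order_trans norm_ge_zero)
qed

text \<open>Perturbing the nearest point \<open>y\<close> to \<open>y + t \<langle>z, x - y\<rangle> z\<close> with small \<open>t > 0\<close>
  would bring it closer to \<open>x\<close> unless \<open>\<langle>z, x - y\<rangle> = 0\<close>.\<close>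
lemma nearest_point_orthogonal:
  assumes V: "csubspace V" and "y \<in> V" "z \<in> V"
    and nearest: "\<And>w. w \<in> V \<Longrightarrow> norm (x - y) \<le> norm (x - w)"
  shows "cinner z (x - y) = 0"
proof -
  define c where "c = cinner z (x - y)"
  define t where "t = 1 / ((norm z)\<^sup>2 + 1)"
  have "(norm z)\<^sup>2 + 1 > 0" by (simp add: add_nonneg_pos)
  then have t_pos: "t > 0" and t_z: "t * (norm z)\<^sup>2 < 1" by (simp_all add: t_def divide_simps)
  define s where "s = complex_of_real t * c"
  have "y + scaleC s z \<in> V" using V assms(2,3) by (simp add: csubspace_def)
  then have "norm (x - y) \<le> norm ((x - y) - scaleC s z)"
    using nearest by (simp add: diff_diff_eq)
  then have "(norm (x - y))\<^sup>2 \<le> (norm ((x - y) - scaleC s z))\<^sup>2"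
    by (simp add: power_mono)
  also have "\<dots> = (norm (x - y))\<^sup>2 + (norm (scaleC s z))\<^sup>2 - 2 * Re (cinner (x - y) (scaleC s z))"
    by (rule norm_diff_square)
  also have "(norm (scaleC s z))\<^sup>2 = t\<^sup>2 * (cmod c)\<^sup>2 * (norm z)\<^sup>2"
    using t_pos by (simp add: norm_scaleC s_def norm_mult power_mult_distrib)
  also have "cinner (x - y) (scaleC s z) = s * cnj c"
    by (simp add: cinner_scaleC_right c_def) (metis cinner_commute)
  also have "Re (s * cnj c) = t * (cmod c)\<^sup>2"
    using cmod_power2[of c] by (simp add: s_def power2_eq_square algebra_simps)
  finally have "0 \<le> t * (cmod c)\<^sup>2 * (t * (norm z)\<^sup>2 - 2)"
    by (simp add: algebra_simps power2_eq_square)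
  then have "t * (cmod c)\<^sup>2 \<le> 0"
    using t_z mult_pos_neg[of "t * (cmod c)\<^sup>2" "t * (norm z)\<^sup>2 - 2"] by linarith
  then show ?thesis using t_pos by (simp add: c_def mult_le_0_iff)
qed

locale closed_csubspace =
  fixes V :: "'a::chilbert_space set"
  assumes csubspace: "csubspace V" and closed: "closed V"
begin

lemma orth_proj_unique:
  assumes "y \<in> V" and "\<forall>z\<in>V. cinner z (x - y) = 0"
  shows "orth_proj V x = y"
  unfolding orth_proj_def
proof (rule the_equality)
  fix y' assume y': "y' \<in> V \<and> (\<forall>z\<in>V. cinner z (x - y') = 0)"
  then have "y' - y \<in> V" using csubspace_diff[OF csubspace] assms(1) by blast
  then have "cinner (y' - y) (x - y) - cinner (y' - y) (x - y') = 0"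
    using assms(2) y' by simp
  then have "cinner (y' - y) (y' - y) = 0"
    by (simp add: cinner_diff_right[symmetric] algebra_simps)
  then show "y' = y" by (simp add: cinner_self_eq_zero)
qed (use assms in blast)

lemma orth_proj_in: "orth_proj V x \<in> V"
  and orth_proj_orthogonal: "z \<in> V \<Longrightarrow> cinner z (x - orth_proj V x) = 0"
proof -
  obtain y where y: "y \<in> V" "\<forall>w\<in>V. norm (x - y) \<le> norm (x - w)"
    using nearest_point_exists[OF csubspace closed] by blast
  moreover have orthogonal: "\<forall>z\<in>V. cinner z (x - y) = 0"
    using nearest_point_orthogonal[OF csubspace] y by blast
  ultimately have "orth_proj V x = y" using orth_proj_unique by blast
  with y(1) orthogonal
  show "orth_proj V x \<in> V" "z \<in> V \<Longrightarrow> cinner z (x - orth_proj V x) = 0" by simp_all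
qed

lemma orth_proj_orthogonal': "z \<in> V \<Longrightarrow> cinner (x - orth_proj V x) z = 0"
  using orth_proj_orthogonal[of z x] cinner_commute[of "x - orth_proj V x" z] by simp

lemma orth_proj_id: "x \<in> V \<Longrightarrow> orth_proj V x = x"
  by (rule orth_proj_unique) auto

lemma orth_proj_idem: "orth_proj V (orth_proj V x) = orth_proj V x"
  by (rule orth_proj_id[OF orth_proj_in])

lemma orth_proj_self_adjoint: "cinner (orth_proj V x) y = cinner x (orth_proj V y)"
proof -
  have "cinner (orth_proj V x) (y - orth_proj V y) = 0"
    and "cinner (x - orth_proj V x) (orth_proj V y) = 0"
    by (simp_all add: orth_proj_orthogonal orth_proj_orthogonal' orth_proj_in)
  then show ?thesis by (simp add: cinner_diff_left cinner_diff_right)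
qed

lemma orth_proj_eq_0_iff: "orth_proj V x = 0 \<longleftrightarrow> x \<in> orth_compl V"
proof
  assume "orth_proj V x = 0"
  then show "x \<in> orth_compl V" using orth_proj_orthogonal[of _ x] by (auto simp: orth_compl_def)
next
  assume "x \<in> orth_compl V"
  then show "orth_proj V x = 0"
    using csubspace by (intro orth_proj_unique) (auto simp: orth_compl_def csubspace_def)
qed

lemma cbounded_orth_proj: "cbounded (orth_proj V)"
proof (rule cboundedI[where K=1])
  show "clinear (orth_proj V)"
    unfolding clinear_def
  proof (intro conjI allI)
    fix x y
    show "orth_proj V (x + y) = orth_proj V x + orth_proj V y"
    proof (rule orth_proj_unique)
      show "orth_proj V x + orth_proj V y \<in> V"
        using csubspace orth_proj_in by (simp add: csubspace_def)
      show "\<forall>z\<in>V. cinner z (x + y - (orth_proj V x + orth_proj V y)) = 0"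
      proof
        fix z assume "z \<in> V"
        have "x + y - (orth_proj V x + orth_proj V y) = (x - orth_proj V x) + (y - orth_proj V y)"
          by simp
        then show "cinner z (x + y - (orth_proj V x + orth_proj V y)) = 0"
          using orth_proj_orthogonal[OF \<open>z \<in> V\<close>] by (simp only: cinner_add_right) simp
      qed
    qed
  next
    fix c x
    show "orth_proj V (scaleC c x) = scaleC c (orth_proj V x)"
    proof (rule orth_proj_unique)
      show "scaleC c (orth_proj V x) \<in> V"
        using csubspace orth_proj_in by (simp add: csubspace_def)
      show "\<forall>z\<in>V. cinner z (scaleC c x - scaleC c (orth_proj V x)) = 0"
        using orth_proj_orthogonal by (simp add: scaleC_diff_right[symmetric] cinner_scaleC_right)
    qed
  qed
next
  fix x
  have "(norm x)\<^sup>2 = (norm (orth_proj V x + (x - orth_proj V x)))\<^sup>2" by simp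
  also have "\<dots> = (norm (orth_proj V x))\<^sup>2 + (norm (x - orth_proj V x))\<^sup>2"
    using orth_proj_orthogonal[OF orth_proj_in, of x x] by (simp only: norm_add_square) simp
  finally have "(norm (orth_proj V x))\<^sup>2 \<le> (norm x)\<^sup>2" by simp
  then show "norm (orth_proj V x) \<le> norm x * 1"
    using power2_le_imp_le[of "norm (orth_proj V x)" "norm x"] by simp
qed

end

section \<open>Adjoints\<close>

lemma Riesz_representation:
  fixes f :: "'a::chilbert_space \<Rightarrow> complex"
  assumes add: "\<And>a b. f (a + b) = f a + f b" and scale: "\<And>c a. f (scaleC c a) = c * f a"
    and cont: "continuous_on UNIV f"
  shows "\<exists>u. \<forall>x. f x = cinner u x"
proof (cases "\<forall>x. f x = 0")
  case False
  then obtain x0 where x0: "f x0 \<noteq> 0" by blast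
  have diff: "f (a - b) = f a - f b" for a b
    using add[of "a - b" b] by simp
  define K where "K = {x. f x = 0}"
  have "csubspace K"
    using add scale scale[of 0 0] by (auto simp: csubspace_def K_def)
  moreover have "closed K"
    unfolding K_def using cont by (intro closed_Collect_eq) (auto intro: continuous_intros)
  ultimately interpret K: closed_csubspace K by unfold_locales
  define w where "w = x0 - orth_proj K x0"
  have fw: "f w = f x0" using K.orth_proj_in[of x0] by (simp add: w_def diff K_def)
  have w_orth: "cinner k w = 0" if "k \<in> K" for k
    unfolding w_def using that by (rule K.orth_proj_orthogonal)
  have "w \<noteq> 0" using fw x0 scale[of 0 0] by auto
  then have nw: "(norm w)\<^sup>2 \<noteq> 0" by simp
  define u where "u = scaleC (cnj (f w) / complex_of_real ((norm w)\<^sup>2)) w"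
  have "f x = cinner u x" for x
  proof -
    define a where "a = f x / f w"
    have "x - scaleC a w \<in> K" using fw x0 by (simp add: K_def diff scale a_def)
    then have "cinner (x - scaleC a w) w = 0" by (rule w_orth)
    then have "cinner w (x - scaleC a w) = 0" using cinner_commute[of w "x - scaleC a w"] by simp
    then have "cinner w x = a * complex_of_real ((norm w)\<^sup>2)"
      by (simp add: cinner_diff_right cinner_scaleC_right cinner_self_eq_norm_sq)
    then have "f x = f w * cinner w x / complex_of_real ((norm w)\<^sup>2)"
      using fw x0 nw by (simp add: a_def field_simps)
    then show ?thesis by (simp add: u_def cinner_scaleC_left)
  qed
  then show ?thesis by blast
qed (use cinner_zero_left in metis)

lemma cadjoint_exists:
  fixes T :: "'a::chilbert_space \<Rightarrow> 'a"
  assumes T: "cbounded T"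
  shows "\<exists>S. \<forall>x y. cinner (T x) y = cinner x (S y)"
proof -
  have lT: "clinear T" using T by (rule cbounded_clinear)
  have "\<exists>u. \<forall>x. cinner y (T x) = cinner u x" for y
    by (rule Riesz_representation)
      (auto simp: clinear_add[OF lT] clinear_scaleC[OF lT] cinner_add_right cinner_scaleC_right
        intro!: continuous_intros cbounded_continuous_on[OF T])
  then obtain S where S: "\<And>y x. cinner y (T x) = cinner (S y) x" by metis
  have "cinner (T x) y = cinner x (S y)" for x y
    using S[of y x] cinner_commute[of "T x" y] cinner_commute[of x "S y"] by simp
  then show ?thesis by blast
qed

lemma cinner_cadjoint:
  assumes "cbounded T"
  shows "cinner (T x) y = cinner x (cadjoint T y)"
proof -
  obtain S where S: "\<forall>x y. cinner (T x) y = cinner x (S y)"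
    using cadjoint_exists[OF assms] by blast
  have "cadjoint T = S"
    unfolding cadjoint_def
  proof (rule the_equality)
    fix S' assume S': "\<forall>x y. cinner (T x) y = cinner x (S' y)"
    have "S' y = S y" for y
      by (rule cinner_eqI) (use S S' in metis)
    then show "S' = S" by blast
  qed (use S in blast)
  with S show ?thesis by simp
qed

lemma cinner_cadjoint':
  assumes "cbounded T"
  shows "cinner (cadjoint T x) y = cinner x (T y)"
  using cinner_cadjoint[OF assms, of y x] cinner_commute[of "T y" x]
    cinner_commute[of y "cadjoint T x"] by simp

lemma cbounded_cadjoint:
  assumes T: "cbounded T"
  shows "cbounded (cadjoint T)"
proof -
  obtain K where K: "K > 0" "\<And>x. norm (T x) \<le> norm x * K" using cbounded_pos_bound[OF T] by blast
  have "clinear (cadjoint T)"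
    unfolding clinear_def
    by (intro conjI allI; rule cinner_eqI)
      (simp_all add: cinner_cadjoint[OF T, symmetric] cinner_add_right cinner_scaleC_right)
  moreover have "norm (cadjoint T y) \<le> norm y * K" for y
  proof -
    have "(norm (cadjoint T y))\<^sup>2 = Re (cinner (T (cadjoint T y)) y)"
      by (simp add: cinner_cadjoint[OF T] Re_cinner_self)
    also have "\<dots> \<le> norm (T (cadjoint T y)) * norm y"
      using complex_Re_le_cmod Cauchy_Schwarz_cinner by (rule order_trans)
    also have "\<dots> \<le> norm (cadjoint T y) * K * norm y" using K by (intro mult_right_mono) auto
    finally have "norm (cadjoint T y) * norm (cadjoint T y) \<le> norm (cadjoint T y) * (K * norm y)"
      by (simp add: power2_eq_square mult.assoc)
    then show ?thesis
      using K(1) by (cases "cadjoint T y = 0") (auto simp: mult.commute)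
  qed
  ultimately show ?thesis by (rule cboundedI)
qed

section \<open>Positive operators\<close>

lemma positive_op_self_adjoint:
  assumes "positive_op A"
  shows "cinner (A x) y = cinner x (A y)"
proof -
  have lA: "clinear A" and real: "\<And>x. Im (cinner (A x) x) = 0"
    using assms by (auto simp: positive_op_def cbounded_def)
  define h where "h x y = cinner (A x) y - cinner x (A y)" for x y
  have h_diag: "h x x = 0" for x
    using real[of x] cinner_commute[of x "A x"] by (simp add: h_def complex_eq_iff)
  have h_add: "h (x + y) (x + y) = h x x + h y y + h x y + h y x" for x y
    by (simp add: h_def clinear_add[OF lA] cinner_add_left cinner_add_right)
  have "h x y + h y x = 0" using h_add[of x y] h_diag by simp
  moreover have "h x (scaleC \<i> y) + h (scaleC \<i> y) x = 0"
    using h_add[of x "scaleC \<i> y"] h_diag by simp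
  then have "\<i> * h x y - \<i> * h y x = 0"
    by (simp add: h_def clinear_scaleC[OF lA] cinner_scaleC_left cinner_scaleC_right algebra_simps)
  ultimately have "h x y = 0" by (simp add: algebra_simps eq_neg_iff_add_eq_0)
  then show ?thesis by (simp add: h_def)
qed

lemma positive_op_Cauchy_Schwarz:
  assumes "positive_op A"
  shows "(cmod (cinner (A x) y))\<^sup>2 \<le> Re (cinner (A x) x) * Re (cinner (A y) y)"
proof -
  have lA: "clinear A" using assms by (simp add: positive_op_def cbounded_def)
  have nonneg: "\<And>z. 0 \<le> Re (cinner (A z) z)" using assms by (simp add: positive_op_def)
  define c where "c = cinner (A x) y"
  define a where "a = Re (cinner (A x) x)"
  define b where "b = Re (cinner (A y) y)"
  have Ayx: "cinner (A y) x = cnj c"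
    unfolding c_def using positive_op_self_adjoint[OF assms, of y x] cinner_commute[of y "A x"]
    by simp
  have Ayy: "cinner (A y) y = complex_of_real b"
    using assms by (simp add: b_def positive_op_def complex_eq_iff)
  have quadratic: "0 \<le> a - 2 * t * (cmod c)\<^sup>2 + t\<^sup>2 * (cmod c)\<^sup>2 * b" for t :: real
  proof -
    define s where "s = complex_of_real t * cnj c"
    have "0 \<le> Re (cinner (A (x - scaleC s y)) (x - scaleC s y))" by (rule nonneg)
    also have "cinner (A (x - scaleC s y)) (x - scaleC s y)
      = cinner (A x) x - s * c - cnj s * cnj c + cnj s * s * complex_of_real b"
      by (simp add: clinear_diff[OF lA] clinear_scaleC[OF lA] cinner_diff_left cinner_diff_right
          cinner_scaleC_left cinner_scaleC_right algebra_simps c_def Ayx Ayy)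
    also have "Re \<dots> = a - 2 * t * (cmod c)\<^sup>2 + t\<^sup>2 * (cmod c)\<^sup>2 * b"
      using cmod_power2[of c] by (simp add: a_def s_def power2_eq_square algebra_simps)
    finally show ?thesis .
  qed
  have "(cmod c)\<^sup>2 \<le> a * b"
  proof (cases "b = 0")
    case True
    then have "c = 0"
      using quadratic[of "(a + 1) / (cmod c)\<^sup>2"] nonneg[of x] by (cases "c = 0") (auto simp: a_def)
    then show ?thesis using True by simp
  next
    case False
    then have b_pos: "b > 0" using nonneg[of y] by (simp add: b_def)
    have "0 \<le> a - 2 * (1/b) * (cmod c)\<^sup>2 + (1/b)\<^sup>2 * (cmod c)\<^sup>2 * b" by (rule quadratic)
    also have "\<dots> = a - (cmod c)\<^sup>2 / b"
      using b_pos by (simp add: power2_eq_square field_simps)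
    finally show ?thesis using b_pos by (simp add: field_simps)
  qed
  then show ?thesis by (simp add: c_def a_def b_def)
qed

lemma positive_op_form_eq_0_imp:
  assumes "positive_op A" and "Re (cinner (A x) x) = 0"
  shows "A x = 0"
proof -
  have "(cmod (cinner (A x) (A x)))\<^sup>2 \<le> 0"
    using positive_op_Cauchy_Schwarz[OF assms(1), of x "A x"] assms(2) by simp
  then show ?thesis by (simp add: cinner_self_eq_zero)
qed

lemma closure_range_self_adjoint:
  fixes A :: "'a::chilbert_space \<Rightarrow> 'a"
  assumes "cbounded A" and self_adjoint: "\<And>x y. cinner (A x) y = cinner x (A y)"
  shows "closure (range A) = orth_compl {x. A x = 0}"
proof -
  interpret M: closed_csubspace "closure (range A)"
    using assms by unfold_locales (auto intro: csubspace_closure csubspace_range cbounded_clinear)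
  have "range A \<subseteq> orth_compl {x. A x = 0}"
    by (auto simp: orth_compl_def simp flip: self_adjoint)
  then have "closure (range A) \<subseteq> orth_compl {x. A x = 0}"
    using closure_minimal closed_orth_compl by blast
  moreover have "x \<in> closure (range A)" if x: "x \<in> orth_compl {x. A x = 0}" for x
  proof -
    define p where "p = orth_proj (closure (range A)) x"
    have "\<forall>y. cinner (A y) (x - p) = 0"
    proof
      fix y
      have "A y \<in> closure (range A)" using closure_subset[of "range A"] by blast
      then show "cinner (A y) (x - p) = 0" unfolding p_def by (rule M.orth_proj_orthogonal)
    qed
    then have "\<forall>y. cinner y (A (x - p)) = 0" by (simp add: self_adjoint)
    then have "A (x - p) = 0" by (simp add: all_cinner_eq_zero_iff)
    then have "cinner (x - p) x = 0" using x by (simp add: orth_compl_def)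
    moreover have "cinner (x - p) p = 0"
      unfolding p_def by (rule M.orth_proj_orthogonal'[OF M.orth_proj_in])
    ultimately have "cinner (x - p) (x - p) = 0" by (simp add: cinner_diff_right)
    then have "x - p = 0" by (simp only: cinner_self_eq_zero)
    then show ?thesis using M.orth_proj_in[of x] by (simp add: p_def)
  qed
  ultimately show ?thesis by blast
qed

section \<open>Positive square roots\<close>

text \<open>The coefficients of \<open>1 - sqrt (1 - t) = (\<Sum>k. sqrt_coeff k * t ^ k)\<close>: writing
  \<open>f = 1 - sqrt (1 - t)\<close>, the identity \<open>(1 - f)\<^sup>2 = 1 - t\<close> reads \<open>f = (t + f\<^sup>2) / 2\<close>.\<close>
function sqrt_coeff :: "nat \<Rightarrow> real" where
  "sqrt_coeff n = (if n = 0 then 0 else if n = 1 then 1/2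
     else (\<Sum>i\<in>{1..n-1}. sqrt_coeff i * sqrt_coeff (n - i)) / 2)"
  by auto
termination by (relation "Wellfounded.measure id") auto

declare sqrt_coeff.simps [simp del]

lemma sqrt_coeff_0 [simp]: "sqrt_coeff 0 = 0"
  by (simp add: sqrt_coeff.simps)

lemma sqrt_coeff_nonneg: "sqrt_coeff n \<ge> 0"
proof (induction n rule: less_induct)
  case (less n)
  then have "(\<Sum>i\<in>{1..n-1}. sqrt_coeff i * sqrt_coeff (n - i)) \<ge> 0"
    by (intro sum_nonneg mult_nonneg_nonneg) auto
  then show ?case by (simp add: sqrt_coeff.simps[of n])
qed

lemma sqrt_coeff_convolution:
  "(\<Sum>i\<le>n. sqrt_coeff i * sqrt_coeff (n - i)) = 2 * sqrt_coeff n - (if n = 1 then 1 else 0)"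
proof (cases "n \<le> 1")
  case True
  then show ?thesis by (cases n) (auto simp: sqrt_coeff.simps)
next
  case False
  then have "{..n} = insert 0 (insert n {1..n-1})" by auto
  then have "(\<Sum>i\<le>n. sqrt_coeff i * sqrt_coeff (n - i))
      = (\<Sum>i\<in>{1..n-1}. sqrt_coeff i * sqrt_coeff (n - i))"
    using False by simp
  also have "\<dots> = 2 * sqrt_coeff n" using False by (simp add: sqrt_coeff.simps[of n])
  finally show ?thesis using False by simp
qed

definition sqrt_coeff_sum :: "nat \<Rightarrow> real" where
  "sqrt_coeff_sum N = (\<Sum>n\<le>N. sqrt_coeff n)"

lemma sqrt_coeff_triangle_sum:
  assumes "N \<ge> 1"
  shows "(\<Sum>(i,j)\<in>{(i,j). i + j \<le> N}. sqrt_coeff i * sqrt_coeff j) = 2 * sqrt_coeff_sum N - 1"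
proof -
  have "(\<Sum>(i,j)\<in>{(i,j). i + j \<le> N}. sqrt_coeff i * sqrt_coeff j)
      = (\<Sum>n\<le>N. \<Sum>i\<le>n. sqrt_coeff i * sqrt_coeff (n - i))"
    by (rule sum.triangle_reindex_eq)
  also have "\<dots> = (\<Sum>n\<le>N. 2 * sqrt_coeff n) - (\<Sum>n\<le>N. if n = 1 then 1 else 0)"
    by (simp add: sqrt_coeff_convolution sum_subtractf)
  also have "\<dots> = 2 * sqrt_coeff_sum N - 1"
    using assms by (simp add: sqrt_coeff_sum_def sum_distrib_left)
  finally show ?thesis .
qed

lemma sqrt_coeff_square_sum:
  "(\<Sum>(i,j)\<in>{..N} \<times> {..N}. sqrt_coeff i * sqrt_coeff j) = (sqrt_coeff_sum N)\<^sup>2"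
  by (simp add: sqrt_coeff_sum_def power2_eq_square sum_product sum.cartesian_product)

lemma finite_triangle: "finite {(i,j). i + j \<le> (N::nat)}"
  by (rule finite_subset[of _ "{..N} \<times> {..N}"]) auto

lemma sqrt_coeff_sum_nonneg: "sqrt_coeff_sum N \<ge> 0"
  by (simp add: sqrt_coeff_sum_def sum_nonneg sqrt_coeff_nonneg)

text \<open>Since \<open>sqrt_coeff 0 = 0\<close>, the triangle \<open>i + j \<le> N + 1\<close> contributes only terms
  with \<open>i, j \<le> N\<close>.\<close>
lemma sqrt_coeff_sum_le_1: "sqrt_coeff_sum N \<le> 1"
proof (induction N)
  case 0
  then show ?case by (simp add: sqrt_coeff_sum_def)
next
  case (Suc N)
  define tri where "tri = {(i,j). i + j \<le> Suc N}"
  define box where "box = {..N} \<times> {..N}"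
  have "2 * sqrt_coeff_sum (Suc N) - 1 = (\<Sum>(i,j)\<in>tri. sqrt_coeff i * sqrt_coeff j)"
    unfolding tri_def by (simp add: sqrt_coeff_triangle_sum)
  also have "\<dots> = (\<Sum>(i,j)\<in>tri \<inter> box. sqrt_coeff i * sqrt_coeff j)"
  proof (rule sum.mono_neutral_right)
    show "\<forall>p\<in>tri - tri \<inter> box. (case p of (i,j) \<Rightarrow> sqrt_coeff i * sqrt_coeff j) = 0"
    proof
      fix p assume "p \<in> tri - tri \<inter> box"
      then obtain i j where "p = (i,j)" "i + j \<le> Suc N" "\<not> (i \<le> N \<and> j \<le> N)"
        by (auto simp: tri_def box_def)
      then have "p = (i,j)" "i = 0 \<or> j = 0" by auto
      then show "(case p of (i,j) \<Rightarrow> sqrt_coeff i * sqrt_coeff j) = 0" by auto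
    qed
  qed (auto simp: tri_def finite_triangle)
  also have "\<dots> \<le> (\<Sum>(i,j)\<in>box. sqrt_coeff i * sqrt_coeff j)"
    by (rule sum_mono2) (auto simp: box_def sqrt_coeff_nonneg)
  also have "\<dots> = (sqrt_coeff_sum N)\<^sup>2" unfolding box_def by (rule sqrt_coeff_square_sum)
  also have "\<dots> \<le> 1" using Suc sqrt_coeff_sum_nonneg[of N] by (simp add: power_le_one)
  finally show ?case by simp
qed

lemma summable_sqrt_coeff: "summable sqrt_coeff"
proof (rule summableI_nonneg_bounded[where x=1])
  show "(\<Sum>i<n. sqrt_coeff i) \<le> 1" for n
    using sqrt_coeff_sum_le_1[of "n - 1"]
    by (cases n) (simp_all add: sqrt_coeff_sum_def lessThan_Suc_atMost)
qed (rule sqrt_coeff_nonneg)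

text \<open>The limit \<open>L\<close> satisfies \<open>L\<^sup>2 \<le> 2 L - 1\<close> because the square \<open>{..m} \<times> {..m}\<close> lies
  in the triangle \<open>i + j \<le> 2 m + 1\<close>; hence \<open>L = 1\<close>.\<close>
lemma sqrt_coeff_sum_tendsto_1: "sqrt_coeff_sum \<longlonglongrightarrow> 1"
proof -
  define L where "L = suminf sqrt_coeff"
  have lim: "sqrt_coeff_sum \<longlonglongrightarrow> L"
    unfolding sqrt_coeff_sum_def L_def by (rule summable_LIMSEQ'[OF summable_sqrt_coeff])
  have square_le: "(sqrt_coeff_sum m)\<^sup>2 \<le> 2 * sqrt_coeff_sum (2*m + 1) - 1" for m
  proof -
    have "(sqrt_coeff_sum m)\<^sup>2 = (\<Sum>(i,j)\<in>{..m} \<times> {..m}. sqrt_coeff i * sqrt_coeff j)"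
      by (rule sqrt_coeff_square_sum[symmetric])
    also have "\<dots> \<le> (\<Sum>(i,j)\<in>{(i,j). i + j \<le> 2*m+1}. sqrt_coeff i * sqrt_coeff j)"
      by (rule sum_mono2[OF finite_triangle]) (auto simp: sqrt_coeff_nonneg)
    also have "\<dots> = 2 * sqrt_coeff_sum (2*m+1) - 1" by (simp add: sqrt_coeff_triangle_sum)
    finally show ?thesis .
  qed
  have "strict_mono (\<lambda>m::nat. 2*m+1)" by (auto simp: strict_mono_def)
  then have "(\<lambda>m. sqrt_coeff_sum (2*m+1)) \<longlonglongrightarrow> L"
    using LIMSEQ_subseq_LIMSEQ[OF lim] by (simp add: o_def)
  then have "(\<lambda>m. 2 * sqrt_coeff_sum (2*m + 1) - 1) \<longlonglongrightarrow> 2 * L - 1"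
    by (intro tendsto_intros)
  then have "L\<^sup>2 \<le> 2 * L - 1"
    using square_le by (intro LIMSEQ_le[of "\<lambda>m. (sqrt_coeff_sum m)\<^sup>2"] tendsto_intros lim) auto
  then have "(L - 1)\<^sup>2 \<le> 0" by (simp add: power2_eq_square algebra_simps)
  then have "L = 1" by simp
  then show ?thesis using lim by simp
qed

text \<open>For \<open>0 \<le> B \<le> I\<close> the series \<open>S = (\<Sum>k. sqrt_coeff k *\<^sub>R B ^^ k)\<close> converges in norm, and
  \<open>I - S\<close> is the square root of \<open>I - B\<close>.\<close>
locale positive_contraction =
  fixes B :: "'a::chilbert_space \<Rightarrow> 'a"
  assumes positive: "positive_op B" and form_le: "\<And>x. Re (cinner (B x) x) \<le> (norm x)\<^sup>2"
begin

lemma cbounded: "cbounded B"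
  using positive by (simp add: positive_op_def)

lemma norm_le: "norm (B x) \<le> norm x"
proof (cases "B x = 0")
  case False
  have "cmod (cinner (B x) (B x)) = (norm (B x))\<^sup>2"
    by (simp only: cinner_self_eq_norm_sq norm_of_real) simp
  then have "(norm (B x))\<^sup>2 * (norm (B x))\<^sup>2 = (cmod (cinner (B x) (B x)))\<^sup>2"
    by (simp add: power2_eq_square)
  also have "\<dots> \<le> Re (cinner (B x) x) * Re (cinner (B (B x)) (B x))"
    by (rule positive_op_Cauchy_Schwarz[OF positive])
  also have "\<dots> \<le> (norm x)\<^sup>2 * (norm (B x))\<^sup>2"
    using positive by (intro mult_mono form_le) (auto simp: positive_op_def)
  finally have "(norm (B x))\<^sup>2 * (norm (B x))\<^sup>2 \<le> (norm x)\<^sup>2 * (norm (B x))\<^sup>2" .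
  moreover have "(norm (B x))\<^sup>2 > 0" using False by simp
  ultimately have "(norm (B x))\<^sup>2 \<le> (norm x)\<^sup>2" by (rule mult_right_le_imp_le)
  then show ?thesis using power2_le_imp_le[of "norm (B x)" "norm x"] by simp
qed simp

lemma norm_funpow_le: "norm ((B ^^ k) x) \<le> norm x"
  by (induction k) (auto intro: order_trans[OF norm_le])

lemma clinear_funpow: "clinear (B ^^ k)"
  by (rule cbounded_clinear[OF cbounded_funpow[OF cbounded]])

lemma funpow_self_adjoint: "cinner ((B ^^ k) x) y = cinner x ((B ^^ k) y)"
  by (induction k arbitrary: x y)
    (simp_all add: positive_op_self_adjoint[OF positive] funpow_swap1)

definition S_partial :: "nat \<Rightarrow> 'a \<Rightarrow> 'a" where
  "S_partial N x = (\<Sum>k\<le>N. sqrt_coeff k *\<^sub>R (B ^^ k) x)"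

definition S :: "'a \<Rightarrow> 'a" where
  "S x = (\<Sum>k. sqrt_coeff k *\<^sub>R (B ^^ k) x)"

lemma S_partial_tendsto: "(\<lambda>N. S_partial N x) \<longlonglongrightarrow> S x"
proof -
  have "summable (\<lambda>k. sqrt_coeff k *\<^sub>R (B ^^ k) x)"
  proof (rule summable_comparison_test'[where N=0])
    show "summable (\<lambda>k. sqrt_coeff k * norm x)" by (rule summable_mult2[OF summable_sqrt_coeff])
    show "norm (sqrt_coeff k *\<^sub>R (B ^^ k) x) \<le> sqrt_coeff k * norm x" for k
      using norm_funpow_le[of k x] sqrt_coeff_nonneg[of k] by (simp add: mult_left_mono)
  qed
  then show ?thesis unfolding S_partial_def S_def by (rule summable_LIMSEQ')
qed

lemma norm_S_partial_le: "norm (S_partial N x) \<le> norm x"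
proof -
  have "norm (S_partial N x) \<le> (\<Sum>k\<le>N. norm (sqrt_coeff k *\<^sub>R (B ^^ k) x))"
    unfolding S_partial_def by (rule norm_sum)
  also have "\<dots> \<le> (\<Sum>k\<le>N. sqrt_coeff k * norm x)"
    by (rule sum_mono) (use norm_funpow_le sqrt_coeff_nonneg in \<open>simp add: mult_left_mono\<close>)
  also have "\<dots> = sqrt_coeff_sum N * norm x" by (simp add: sqrt_coeff_sum_def sum_distrib_right)
  also have "\<dots> \<le> norm x"
    using sqrt_coeff_sum_le_1[of N] mult_right_mono[of "sqrt_coeff_sum N" 1 "norm x"] by simp
  finally show ?thesis .
qed

lemma norm_S_le: "norm (S x) \<le> norm x"
  by (rule LIMSEQ_le_const2[OF tendsto_norm[OF S_partial_tendsto]]) (use norm_S_partial_le in auto)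

lemma S_partial_commute:
  assumes C: "clinear C" and CB: "\<And>x. C (B x) = B (C x)"
  shows "C (S_partial N x) = S_partial N (C x)"
proof -
  have "C ((B ^^ k) x) = (B ^^ k) (C x)" for k x
    by (induction k) (auto simp: CB)
  then show ?thesis by (simp add: S_partial_def clinear_sum[OF C] clinear_scaleR[OF C])
qed

lemma S_commute:
  assumes C: "cbounded C" and CB: "\<And>x. C (B x) = B (C x)"
  shows "C (S x) = S (C x)"
proof -
  have "(\<lambda>N. C (S_partial N x)) \<longlonglongrightarrow> C (S x)" by (rule cbounded_tendsto[OF C S_partial_tendsto])
  then have "(\<lambda>N. S_partial N (C x)) \<longlonglongrightarrow> C (S x)"
    by (simp add: S_partial_commute[OF cbounded_clinear[OF C] CB])
  then show ?thesis using S_partial_tendsto[of "C x"] LIMSEQ_unique by blast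
qed

lemma cbounded_S: "cbounded S"
proof (rule cboundedI[where K=1])
  show "clinear S"
    unfolding clinear_def
  proof (intro conjI allI)
    fix x y c
    have "(\<lambda>N. S_partial N (x + y)) \<longlonglongrightarrow> S x + S y"
      using tendsto_add[OF S_partial_tendsto S_partial_tendsto]
      by (simp add: S_partial_def clinear_add[OF clinear_funpow] scaleR_add_right sum.distrib)
    then show "S (x + y) = S x + S y" using S_partial_tendsto LIMSEQ_unique by blast
    have "(\<lambda>N. S_partial N (scaleC c x)) \<longlonglongrightarrow> scaleC c (S x)"
      using bounded_linear.tendsto[OF bounded_linear_scaleC S_partial_tendsto]
      by (simp add: S_partial_def clinear_scaleC[OF clinear_funpow] scaleC_sum_right
          scaleC_scaleR_commute)
    then show "S (scaleC c x) = scaleC c (S x)" using S_partial_tendsto LIMSEQ_unique by blast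
  qed
qed (simp add: norm_S_le)

lemma S_self_adjoint: "cinner (S x) y = cinner x (S y)"
proof -
  have "(\<lambda>N. cinner (S_partial N x) y) \<longlonglongrightarrow> cinner (S x) y"
    by (intro tendsto_intros S_partial_tendsto)
  moreover have "(\<lambda>N. cinner x (S_partial N y)) \<longlonglongrightarrow> cinner x (S y)"
    by (intro tendsto_intros S_partial_tendsto)
  moreover have "cinner (S_partial N x) y = cinner x (S_partial N y)" for N
    by (simp add: S_partial_def cinner_sum_left cinner_sum_right cinner_scaleR_left
        cinner_scaleR_right funpow_self_adjoint)
  ultimately show ?thesis using LIMSEQ_unique by fastforce
qed

lemma S_partial_square:
  assumes "N \<ge> 1"
  shows "S_partial N (S_partial N x) = (2 *\<^sub>R S_partial N x - B x) +
    (\<Sum>(i,j)\<in>{..N} \<times> {..N} - {(i,j). i + j \<le> N}. (sqrt_coeff i * sqrt_coeff j) *\<^sub>R (B ^^ (i + j)) x)"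
proof -
  define g where "g = (\<lambda>(i,j). (sqrt_coeff i * sqrt_coeff j) *\<^sub>R (B ^^ (i + j)) x)"
  define box where "box = {..N} \<times> {..N}"
  define tri where "tri = {(i::nat,j). i + j \<le> N}"
  have "S_partial N (S_partial N x) = sum g box"
    by (simp add: S_partial_def clinear_sum[OF clinear_funpow] clinear_scaleR[OF clinear_funpow]
        scaleR_sum_right funpow_add box_def g_def sum.cartesian_product)
  also have "\<dots> = sum g (box - tri) + sum g tri"
    by (rule sum.subset_diff) (auto simp: box_def tri_def)
  also have "sum g tri = (\<Sum>n\<le>N. \<Sum>i\<le>n. (sqrt_coeff i * sqrt_coeff (n - i)) *\<^sub>R (B ^^ n) x)"
    unfolding g_def tri_def by (subst sum.triangle_reindex_eq) simp
  also have "\<dots> = (\<Sum>n\<le>N. (2 * sqrt_coeff n) *\<^sub>R (B ^^ n) x - (if n = 1 then (B ^^ n) x else 0))"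
    by (rule sum.cong) (auto simp: scaleR_sum_left[symmetric] sqrt_coeff_convolution scaleR_diff_left)
  also have "\<dots> = 2 *\<^sub>R S_partial N x - B x"
    using assms by (simp add: sum_subtractf S_partial_def scaleR_sum_right)
  finally show ?thesis by (simp add: g_def box_def tri_def add.commute)
qed

lemma norm_S_partial_square_error:
  assumes "N \<ge> 1"
  shows "norm (S_partial N (S_partial N x) - (2 *\<^sub>R S_partial N x - B x))
    \<le> ((sqrt_coeff_sum N)\<^sup>2 - (2 * sqrt_coeff_sum N - 1)) * norm x"
proof -
  define c where "c = (\<lambda>(i,j). sqrt_coeff i * sqrt_coeff j)"
  define box where "box = {..N} \<times> {..N}"
  define tri where "tri = {(i::nat,j). i + j \<le> N}"
  have tri_box: "tri \<subseteq> box" by (auto simp: tri_def box_def)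
  have "norm (S_partial N (S_partial N x) - (2 *\<^sub>R S_partial N x - B x))
      = norm (\<Sum>(i,j)\<in>box - tri. (sqrt_coeff i * sqrt_coeff j) *\<^sub>R (B ^^ (i + j)) x)"
    using S_partial_square[OF assms] by (simp add: box_def tri_def)
  also have "\<dots> \<le> (\<Sum>(i,j)\<in>box - tri. norm ((sqrt_coeff i * sqrt_coeff j) *\<^sub>R (B ^^ (i + j)) x))"
    by (rule norm_sum[THEN order_trans]) (simp add: case_prod_unfold)
  also have "\<dots> \<le> (\<Sum>p\<in>box - tri. c p * norm x)"
    using norm_funpow_le sqrt_coeff_nonneg
    by (intro sum_mono) (auto simp: c_def mult_left_mono)
  also have "\<dots> = (sum c box - sum c tri) * norm x"
    using sum_diff[of box tri c] tri_box by (simp add: sum_distrib_right[symmetric] box_def)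
  also have "sum c box = (sqrt_coeff_sum N)\<^sup>2"
    unfolding c_def box_def by (rule sqrt_coeff_square_sum)
  also have "sum c tri = 2 * sqrt_coeff_sum N - 1"
    unfolding c_def tri_def using assms by (rule sqrt_coeff_triangle_sum)
  finally show ?thesis .
qed

lemma S_partial_diff: "S_partial N (x - y) = S_partial N x - S_partial N y"
  by (simp add: S_partial_def clinear_diff[OF clinear_funpow] scaleR_diff_right sum_subtractf)

lemma S_square: "S (S x) = 2 *\<^sub>R S x - B x"
proof -
  have lim1: "(\<lambda>N. S_partial N (S_partial N x)) \<longlonglongrightarrow> S (S x)"
  proof -
    have "(\<lambda>N. norm (S_partial N x - S x)) \<longlonglongrightarrow> 0"
      using S_partial_tendsto[of x] by (simp add: LIM_zero tendsto_norm_zero)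
    then have "(\<lambda>N. S_partial N (S_partial N x - S x)) \<longlonglongrightarrow> 0"
      by (rule Lim_null_comparison[rotated]) (use norm_S_partial_le in auto)
    then have "(\<lambda>N. S_partial N (S x) + S_partial N (S_partial N x - S x)) \<longlonglongrightarrow> S (S x) + 0"
      by (intro tendsto_add S_partial_tendsto)
    then show ?thesis by (simp add: S_partial_diff)
  qed
  have lim2: "(\<lambda>N. S_partial N (S_partial N x)) \<longlonglongrightarrow> 2 *\<^sub>R S x - B x"
  proof -
    define e where "e N = ((sqrt_coeff_sum N)\<^sup>2 - (2 * sqrt_coeff_sum N - 1)) * norm x" for N
    have "e \<longlonglongrightarrow> (1\<^sup>2 - (2 * 1 - 1)) * norm x"
      unfolding e_def by (intro tendsto_intros sqrt_coeff_sum_tendsto_1)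
    then have "e \<longlonglongrightarrow> 0" by simp
    moreover have "\<forall>\<^sub>F N in sequentially.
        norm (S_partial N (S_partial N x) - (2 *\<^sub>R S_partial N x - B x)) \<le> e N"
      unfolding e_def using norm_S_partial_square_error eventually_sequentially by blast
    ultimately have "(\<lambda>N. S_partial N (S_partial N x) - (2 *\<^sub>R S_partial N x - B x)) \<longlonglongrightarrow> 0"
      by (rule Lim_null_comparison[rotated])
    moreover have "(\<lambda>N. 2 *\<^sub>R S_partial N x - B x) \<longlonglongrightarrow> 2 *\<^sub>R S x - B x"
      by (intro tendsto_intros S_partial_tendsto)
    ultimately have "(\<lambda>N. (S_partial N (S_partial N x) - (2 *\<^sub>R S_partial N x - B x)) +
        (2 *\<^sub>R S_partial N x - B x)) \<longlonglongrightarrow> 0 + (2 *\<^sub>R S x - B x)"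
      by (rule tendsto_add)
    then show ?thesis by simp
  qed
  from lim1 lim2 show ?thesis by (rule LIMSEQ_unique)
qed

definition root :: "'a \<Rightarrow> 'a" where
  "root x = x - S x"

lemma cbounded_root: "cbounded root"
  unfolding root_def[abs_def] by (rule cbounded_diff[OF cbounded_ident cbounded_S])

lemma root_square: "root (root x) = x - B x"
  using clinear_diff[OF cbounded_clinear[OF cbounded_S], of x "S x"]
  by (simp add: root_def S_square scaleR_2 algebra_simps)

lemma root_positive: "positive_op root"
  unfolding positive_op_def
proof (intro conjI allI)
  show "cbounded root" by (rule cbounded_root)
  fix x
  have "cinner (root x) x = cnj (cinner (root x) x)"
    using cinner_commute[of x "root x"]
    by (simp add: root_def cinner_diff_left cinner_diff_right S_self_adjoint)
  then show "Im (cinner (root x) x) = 0"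
    by (metis cnj.simps(2) complex_cnj_cancel_iff neg_equal_zero)
  have "Re (cinner (S x) x) \<le> norm (S x) * norm x"
    using complex_Re_le_cmod Cauchy_Schwarz_cinner by (rule order_trans)
  also have "\<dots> \<le> norm x * norm x" using norm_S_le by (intro mult_right_mono) auto
  finally show "0 \<le> Re (cinner (root x) x)"
    by (simp add: root_def cinner_diff_left Re_cinner_self power2_eq_square)
qed

lemma root_commute:
  assumes "cbounded C" and "\<And>x. C (B x) = B (C x)"
  shows "C (root x) = root (C x)"
  using S_commute[OF assms] clinear_diff[OF cbounded_clinear[OF assms(1)]] by (simp add: root_def)

end

lemma positive_contraction_identity_minus:
  assumes A: "positive_op A" and K: "K > 0" "\<And>x. norm (A x) \<le> norm x * K"
  shows "positive_contraction (\<lambda>x. x - (1/K) *\<^sub>R A x)"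
proof
  have form_A_le: "Re (cinner (A x) x) \<le> K * (norm x)\<^sup>2" for x
  proof -
    have "Re (cinner (A x) x) \<le> norm (A x) * norm x"
      using complex_Re_le_cmod Cauchy_Schwarz_cinner by (rule order_trans)
    also have "\<dots> \<le> norm x * K * norm x" using K by (intro mult_right_mono) auto
    finally show ?thesis by (simp add: power2_eq_square algebra_simps)
  qed
  have form: "cinner (x - (1/K) *\<^sub>R A x) x = complex_of_real ((norm x)\<^sup>2 - Re (cinner (A x) x) / K)"
    for x
    using A by (simp add: cinner_diff_left cinner_scaleR_left cinner_self_eq_norm_sq
        positive_op_def complex_eq_iff)
  show "positive_op (\<lambda>x. x - (1/K) *\<^sub>R A x)"
    unfolding positive_op_def
  proof (intro conjI allI)
    show "cbounded (\<lambda>x. x - (1/K) *\<^sub>R A x)"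
      using A by (intro cbounded_diff cbounded_ident cbounded_scaleR) (simp add: positive_op_def)
    show "Im (cinner (x - (1/K) *\<^sub>R A x) x) = 0" "0 \<le> Re (cinner (x - (1/K) *\<^sub>R A x) x)" for x
      using form_A_le[of x] K by (simp_all add: form field_simps)
  qed
  show "Re (cinner (x - (1/K) *\<^sub>R A x) x) \<le> (norm x)\<^sup>2" for x
    using A K by (simp add: form positive_op_def)
qed

text \<open>\<open>A = K (I - B)\<close> with \<open>B = I - A / K\<close>, so \<open>A\<^sup>1\<^sup>/\<^sup>2 = sqrt K (I - B)\<^sup>1\<^sup>/\<^sup>2\<close>.\<close>
lemma positive_sqrt_exists:
  fixes A :: "'a::chilbert_space \<Rightarrow> 'a"
  assumes A: "positive_op A"
  shows "\<exists>R. positive_op R \<and> (\<forall>x. R (R x) = A x) \<and>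
           (\<forall>C. cbounded C \<longrightarrow> (\<forall>x. C (A x) = A (C x)) \<longrightarrow> (\<forall>x. C (R x) = R (C x)))"
proof -
  obtain K where K: "K > 0" "\<And>x. norm (A x) \<le> norm x * K"
    using A cbounded_pos_bound by (auto simp: positive_op_def)
  define B where "B x = x - (1/K) *\<^sub>R A x" for x
  interpret positive_contraction B
    unfolding B_def[abs_def] using A K by (rule positive_contraction_identity_minus)
  define R where "R x = sqrt K *\<^sub>R root x" for x
  have "positive_op R"
    using root_positive K
    by (auto simp: positive_op_def R_def[abs_def] cinner_scaleR_left intro: cbounded_scaleR)
  moreover have "R (R x) = A x" for x
    using K clinear_scaleR[OF cbounded_clinear[OF cbounded_root]]
    by (simp add: R_def root_square B_def)
  moreover have "C (R x) = R (C x)" if C: "cbounded C" and CA: "\<forall>x. C (A x) = A (C x)" for C x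
  proof -
    have lC: "clinear C" using C by (rule cbounded_clinear)
    have "C (B y) = B (C y)" for y using CA by (simp add: B_def clinear_diff[OF lC] clinear_scaleR[OF lC])
    then show ?thesis by (simp add: R_def clinear_scaleR[OF lC] root_commute[OF C])
  qed
  ultimately show ?thesis by blast
qed

text \<open>With \<open>y = C x - R x\<close> one gets \<open>C y + R y = (C\<^sup>2 - R\<^sup>2) x = 0\<close>, so both positive
  forms vanish at \<open>y\<close>, hence \<open>C y = R y = 0\<close> and \<open>\<langle>y, y\<rangle> = \<langle>x, C y - R y\<rangle> = 0\<close>.\<close>
lemma commuting_positive_sqrt_unique:
  assumes C: "positive_op C" and R: "positive_op R" and CR: "\<And>x. C (R x) = R (C x)"
    and square: "\<And>x. C (C x) = R (R x)"
  shows "C x = R x"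
proof -
  have lC: "clinear C" and lR: "clinear R"
    using C R by (simp_all add: positive_op_def cbounded_clinear)
  define y where "y = C x - R x"
  have "C y + R y = 0"
    by (simp add: y_def clinear_diff[OF lC] clinear_diff[OF lR] square CR)
  then have "Re (cinner (C y) y) + Re (cinner (R y) y) = 0"
    by (metis cinner_add_left cinner_zero_left plus_complex.sel(1) zero_complex.sel(1))
  moreover have "Re (cinner (C y) y) \<ge> 0" "Re (cinner (R y) y) \<ge> 0"
    using C R by (auto simp: positive_op_def)
  ultimately have "C y = 0" "R y = 0"
    using positive_op_form_eq_0_imp C R by (metis add_nonneg_eq_0_iff)+
  then have "cinner y y = 0"
    by (simp add: y_def cinner_diff_left positive_op_self_adjoint[OF C] positive_op_self_adjoint[OF R])
  then show ?thesis by (simp add: y_def cinner_self_eq_zero)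
qed

lemma op_sqrt:
  assumes A: "positive_op A"
  shows "positive_op (op_sqrt A)" and "op_sqrt A (op_sqrt A x) = A x"
    and "cbounded C \<Longrightarrow> (\<And>x. C (A x) = A (C x)) \<Longrightarrow> C (op_sqrt A x) = op_sqrt A (C x)"
proof -
  obtain R where R: "positive_op R" "\<And>x. R (R x) = A x"
    "\<And>C. cbounded C \<Longrightarrow> \<forall>x. C (A x) = A (C x) \<Longrightarrow> \<forall>x. C (R x) = R (C x)"
    using positive_sqrt_exists[OF A] by blast
  have "op_sqrt A = R"
    unfolding op_sqrt_def
  proof (rule the_equality)
    show "positive_op R \<and> R \<circ> R = A" using R by (auto simp: o_def)
  next
    fix C assume C: "positive_op C \<and> C \<circ> C = A"
    then have CC: "C (C x) = A x" for x by (metis comp_apply)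
    then have "\<forall>x. C (A x) = A (C x)" by metis
    then have "C (R x) = R (C x)" for x using R(3) C by (simp add: positive_op_def)
    then show "C = R"
      using commuting_positive_sqrt_unique[OF _ R(1)] C CC R(2) by auto
  qed
  with R show "positive_op (op_sqrt A)" and "op_sqrt A (op_sqrt A x) = A x"
    and "cbounded C \<Longrightarrow> (\<And>x. C (A x) = A (C x)) \<Longrightarrow> C (op_sqrt A x) = op_sqrt A (C x)"
    by auto
qed

section \<open>Regularity with respect to a positive operator\<close>

locale positive_operator =
  fixes A :: "'a::chilbert_space \<Rightarrow> 'a"
  assumes positive: "positive_op A"
begin

abbreviation "M \<equiv> closure (range A)"
abbreviation "P \<equiv> orth_proj M"
abbreviation "R \<equiv> op_sqrt A"

lemma cbounded: "cbounded A"
  using positive by (simp add: positive_op_def)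

lemma clinear: "clinear A"
  by (rule cbounded_clinear[OF cbounded])

lemma self_adjoint: "cinner (A x) y = cinner x (A y)"
  by (rule positive_op_self_adjoint[OF positive])

lemma R_positive: "positive_op R"
  and R_square: "R (R x) = A x"
  and R_commute: "cbounded C \<Longrightarrow> (\<And>x. C (A x) = A (C x)) \<Longrightarrow> C (R x) = R (C x)"
  by (rule op_sqrt[OF positive])+

lemma clinear_R: "clinear R"
  using R_positive by (simp add: positive_op_def cbounded_clinear)

lemma R_self_adjoint: "cinner (R x) y = cinner x (R y)"
  by (rule positive_op_self_adjoint[OF R_positive])

lemma R_eq_0_iff: "R x = 0 \<longleftrightarrow> A x = 0"
proof
  assume "A x = 0"
  then have "cinner (R x) (R x) = 0" by (simp add: R_self_adjoint R_square)
  then show "R x = 0" by (simp only: cinner_self_eq_zero)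
qed (use R_square[of x] clinear_zero[OF clinear_R] in simp)

lemma form_eq_norm_R: "Re (cinner (A x) x) = (norm (R x))\<^sup>2"
proof -
  have "cinner (A x) x = cinner (R x) (R x)" by (simp add: R_square[symmetric] R_self_adjoint)
  then show ?thesis by (simp add: Re_cinner_self)
qed

lemma M_eq: "M = orth_compl {x. A x = 0}"
  by (rule closure_range_self_adjoint[OF cbounded self_adjoint])

sublocale M: closed_csubspace M
  by unfold_locales (auto intro: csubspace_closure csubspace_range clinear)

lemma cbounded_P: "cbounded P"
  by (rule M.cbounded_orth_proj)

lemma clinear_P: "clinear P"
  by (rule cbounded_clinear[OF cbounded_P])

lemma P_eq_0_if_kernel:
  assumes "A z = 0"
  shows "P z = 0"
proof -
  have "cinner m z = 0" if "m \<in> M" for m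
    using that assms cinner_commute[of m z] by (simp add: M_eq orth_compl_def)
  then show ?thesis by (simp add: M.orth_proj_eq_0_iff orth_compl_def)
qed

lemma A_in_M: "A x \<in> M"
  using closure_subset[of "range A"] by (rule subsetD) simp

lemma R_in_M: "R x \<in> M"
  unfolding M_eq orth_compl_def
proof (intro CollectI ballI)
  fix z assume "z \<in> {x. A x = 0}"
  then have "R z = 0" by (simp add: R_eq_0_iff)
  then show "cinner z (R x) = 0" by (simp add: R_self_adjoint[symmetric])
qed

lemma P_A: "P (A x) = A x"
  by (rule M.orth_proj_id[OF A_in_M])

lemma P_R: "P (R x) = R x"
  by (rule M.orth_proj_id[OF R_in_M])

lemma A_minus_P: "A (x - P x) = 0"
proof -
  have "cinner y (A (x - P x)) = 0" for y
    using M.orth_proj_orthogonal[OF A_in_M, of y x] by (simp add: self_adjoint)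
  then show ?thesis using all_cinner_eq_zero_iff[of "A (x - P x)"] by blast
qed

lemma A_P: "A (P x) = A x"
  using A_minus_P[of x] clinear_diff[OF clinear] by simp

lemma R_P: "R (P x) = R x"
  using A_minus_P[of x] R_eq_0_iff[of "x - P x"] clinear_diff[OF clinear_R] by simp

lemma closure_range_R: "closure (range R) = M"
proof -
  have "closure (range R) = orth_compl {x. R x = 0}"
    using R_positive
    by (intro closure_range_self_adjoint R_self_adjoint) (simp add: positive_op_def)
  then show ?thesis by (simp add: R_eq_0_iff M_eq)
qed

lemma regular_eq: "regular A T \<longleftrightarrow> (\<forall>x. A (T x) = R (T (R x)))"
  unfolding regular_def by (auto simp: fun_eq_iff)

text \<open>\<open>R T - T R\<close> takes values in \<open>ker R = ker A\<close> when \<open>A T = R T R\<close>.\<close>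
lemma regular_imp_R_T:
  assumes "regular A T"
  shows "R (T z) = P (T (R z))"
proof -
  have "R (R (T z) - T (R z)) = 0"
    using assms by (simp add: regular_eq clinear_diff[OF clinear_R] R_square)
  then have "P (R (T z) - T (R z)) = 0" by (simp add: R_eq_0_iff P_eq_0_if_kernel)
  then show ?thesis by (simp add: clinear_diff[OF clinear_P] P_R)
qed

lemma regular_imp_kernel_invariant:
  assumes "regular A T" "clinear T" "A x = 0"
  shows "A (T x) = 0"
proof -
  have "R x = 0" using assms(3) by (simp add: R_eq_0_iff)
  then have "R (T (R x)) = 0" by (simp add: clinear_zero[OF clinear_R] clinear_zero[OF assms(2)])
  then show ?thesis using assms(1) by (simp add: regular_eq)
qed

lemma regular_imp_commute:
  assumes "regular A T"
  shows "A (P (T (P x))) = P (T (P (A x)))"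
proof -
  have "A (P (T (P x))) = R (R (T (P x)))" by (simp add: A_P R_square)
  also have "\<dots> = R (T (R (P x)))" by (simp add: regular_imp_R_T[OF assms] R_P)
  also have "\<dots> = P (T (P (A x)))" by (simp add: regular_imp_R_T[OF assms] R_square A_P P_A)
  finally show ?thesis .
qed

text \<open>Conversely, \<open>U = P T P\<close> commutes with \<open>A\<close>, hence with \<open>R\<close>, and kernel invariance lets
  \<open>R T\<close> be replaced by \<open>R U = U R = P T R\<close>.\<close>
lemma regularI:
  assumes T: "cbounded T"
    and invariant: "\<And>x. A x = 0 \<Longrightarrow> A (T x) = 0"
    and commute: "\<And>x. A (P (T (P x))) = P (T (P (A x)))"
  shows "regular A T"
proof -
  define U where "U x = P (T (P x))" for x
  have "cbounded U"
    unfolding U_def[abs_def] by (rule cbounded_compose[OF cbounded_P cbounded_compose[OF T cbounded_P]])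
  then have U_R: "U (R x) = R (U x)" for x
    by (rule R_commute) (simp add: U_def commute)
  have R_T: "R (T x) = P (T (R x))" for x
  proof -
    have "A (T (x - P x)) = 0" by (rule invariant[OF A_minus_P])
    then have "R (T x) = R (T (P x))"
      by (simp add: R_eq_0_iff[symmetric] clinear_diff[OF cbounded_clinear[OF T]]
          clinear_diff[OF clinear_R])
    also have "\<dots> = R (U x)" by (simp add: U_def R_P)
    also have "\<dots> = U (R x)" by (rule U_R[symmetric])
    also have "\<dots> = P (T (R x))" by (simp add: U_def P_R)
    finally show ?thesis .
  qed
  have "A (T x) = R (T (R x))" for x
  proof -
    have "A (T x) = R (R (T x))" by (simp add: R_square)
    also have "\<dots> = R (T (R x))" by (simp only: R_T R_P)
    finally show ?thesis .
  qed
  then show ?thesis by (simp add: regular_eq)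
qed

lemma regular_iff:
  assumes "cbounded T"
  shows "regular A T \<longleftrightarrow> (\<forall>x. A x = 0 \<longrightarrow> A (T x) = 0) \<and> (\<forall>x. A (P (T (P x))) = P (T (P (A x))))"
  using regular_imp_kernel_invariant regular_imp_commute regularI assms cbounded_clinear[OF assms]
  by blast

end

section \<open>Compressions\<close>

lemma (in closed_csubspace) adjoint_on_eqI:
  assumes "\<And>x. x \<notin> V \<Longrightarrow> S' x = 0" and "\<And>x. x \<in> V \<Longrightarrow> S' x \<in> V"
    and "\<And>x y. x \<in> V \<Longrightarrow> y \<in> V \<Longrightarrow> cinner (S x) y = cinner x (S' y)"
  shows "adjoint_on V S = S'"
  unfolding adjoint_on_def
proof (rule the_equality)
  fix S'' assume S'': "(\<forall>x. x \<notin> V \<longrightarrow> S'' x = 0) \<and> (\<forall>x\<in>V. S'' x \<in> V) \<and>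
      (\<forall>x\<in>V. \<forall>y\<in>V. cinner (S x) y = cinner x (S'' y))"
  have "S'' y = S' y" if "y \<in> V" for y
  proof -
    define d where "d = S'' y - S' y"
    have "d \<in> V" using S'' assms(2) that csubspace by (simp add: d_def csubspace_diff)
    then have "cinner d (S'' y) = cinner d (S' y)"
      using S'' assms(3) that by metis
    then have "cinner d d = 0" by (simp add: d_def cinner_diff_right)
    then show ?thesis by (simp add: d_def cinner_self_eq_zero)
  qed
  with S'' assms(1) show "S'' = S'" by (metis ext)
qed (use assms in blast)

lemma (in closed_csubspace) adjoint_on_compression:
  assumes T: "cbounded T"
  shows "adjoint_on V (compression V T) = (\<lambda>y. if y \<in> V then orth_proj V (cadjoint T y) else 0)"
proof (rule adjoint_on_eqI)
  fix x y assume x: "x \<in> V" and y: "y \<in> V"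
  have "cinner (compression V T x) y = cinner (T x) (orth_proj V y)"
    using x by (simp add: compression_def orth_proj_self_adjoint)
  also have "\<dots> = cinner (orth_proj V x) (cadjoint T y)"
    using x y by (simp add: orth_proj_id cinner_cadjoint[OF T])
  finally show "cinner (compression V T x) y = cinner x (if y \<in> V then orth_proj V (cadjoint T y) else 0)"
    using y by (simp add: orth_proj_self_adjoint)
qed (auto simp: orth_proj_in)

section \<open>Completely hyperexpansive operators\<close>

text \<open>Pascal's rule for the binomial coefficients gives
  \<open>\<Sum>\<^sub>j (-1)\<^sup>j (n+1 choose j) T\<^sup>*\<^sup>j T\<^sup>j = \<Sum>\<^sub>j (-1)\<^sup>j (n choose j) T\<^sup>*\<^sup>j T\<^sup>j - T\<^sup>* (\<Sum>\<^sub>j (-1)\<^sup>j (n choose j) T\<^sup>*\<^sup>j T\<^sup>j) T\<close>.\<close>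
lemma hyp_sum_Suc:
  assumes T: "cbounded T"
  shows "hyp_sum T (Suc n) x = hyp_sum T n x - cadjoint T (hyp_sum T n (T x))"
proof -
  have lin: "clinear (cadjoint T)" by (rule cbounded_clinear[OF cbounded_cadjoint[OF T]])
  define c where "c n j = (-1) ^ j * real (n choose j)" for n j :: nat
  define v where "v j = (cadjoint T ^^ j) ((T ^^ j) x)" for j
  have hyp: "hyp_sum T m y = (\<Sum>j\<le>m. c m j *\<^sub>R (cadjoint T ^^ j) ((T ^^ j) y))" for m y
    by (simp add: hyp_sum_def c_def atLeast0AtMost)
  have c_Suc: "c (Suc n) (Suc j) = c n (Suc j) - c n j" for j
    by (simp add: c_def algebra_simps)
  have c_0: "c m 0 = 1" for m by (simp add: c_def)
  have "cadjoint T (hyp_sum T n (T x)) = (\<Sum>j\<le>n. c n j *\<^sub>R v (Suc j))"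
    by (simp add: hyp clinear_sum[OF lin] clinear_scaleR[OF lin] v_def funpow_swap1)
  moreover have "hyp_sum T (Suc n) x = c (Suc n) 0 *\<^sub>R v 0 + (\<Sum>j\<le>n. c (Suc n) (Suc j) *\<^sub>R v (Suc j))"
    unfolding hyp v_def by (rule sum.atMost_Suc_shift)
  moreover have "\<dots> = (\<Sum>j\<le>Suc n. c n j *\<^sub>R v j) - (\<Sum>j\<le>n. c n j *\<^sub>R v (Suc j))"
    by (simp only: sum.atMost_Suc_shift) (simp add: c_0 c_Suc scaleR_diff_left sum_subtractf)
  moreover have "(\<Sum>j\<le>Suc n. c n j *\<^sub>R v j) = hyp_sum T n x"
    by (simp add: hyp v_def c_def)
  ultimately show ?thesis by simp
qed

lemma A_op_Suc:
  assumes "cbounded T"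
  shows "A_op T (Suc n) x = A_op T n x - cadjoint T (A_op T n (T x))"
  by (simp add: A_op_def hyp_sum_Suc[OF assms]
      clinear_minus[OF cbounded_clinear[OF cbounded_cadjoint[OF assms]]])

lemma A_op_form_Suc:
  assumes "cbounded T"
  shows "Re (cinner (A_op T (Suc n) x) x) = Re (cinner (A_op T n x) x) - Re (cinner (A_op T n (T x)) (T x))"
  by (simp add: A_op_Suc[OF assms] cinner_diff_left cinner_cadjoint'[OF assms])

lemma nonneg_sequence_constant_decrement:
  fixes y :: "nat \<Rightarrow> real"
  assumes "\<And>k. y k \<ge> 0" and "\<And>k. y k - y (Suc k) = c"
  shows "c \<le> 0"
proof (rule ccontr)
  assume "\<not> c \<le> 0"
  then have c: "c > 0" by simp
  have y_k: "y k = y 0 - real k * c" for k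
  proof (induction k)
    case (Suc k)
    then show ?case using assms(2)[of k] by (simp add: algebra_simps)
  qed simp
  obtain k :: nat where "real k > y 0 / c" using reals_Archimedean2 by blast
  then have "real k * c > y 0" using c by (simp add: field_simps)
  then show False using y_k[of k] assms(1)[of k] by simp
qed

locale completely_hyperexpansive_op =
  fixes T :: "'a::chilbert_space \<Rightarrow> 'a"
  assumes completely_hyperexpansive: "completely_hyperexpansive T"
begin

lemma cbounded_T: "cbounded T"
  using completely_hyperexpansive by (simp add: completely_hyperexpansive_def)

lemma A_op_positive: "n \<ge> 1 \<Longrightarrow> positive_op (A_op T n)"
  using completely_hyperexpansive
  by (simp add: completely_hyperexpansive_def op_le_def A_op_def)

definition A_form :: "nat \<Rightarrow> 'a \<Rightarrow> real" where
  "A_form n y = Re (cinner (A_op T n y) y)"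

lemma A_form_Suc: "A_form (Suc n) y = A_form n y - A_form n (T y)"
  unfolding A_form_def by (rule A_op_form_Suc[OF cbounded_T])

lemma A_form_nonneg: "n \<ge> 1 \<Longrightarrow> A_form n y \<ge> 0"
  using A_op_positive by (simp add: A_form_def positive_op_def)

lemma A_op_eq_0_iff: "n \<ge> 1 \<Longrightarrow> A_op T n y = 0 \<longleftrightarrow> A_form n y = 0"
  using positive_op_form_eq_0_imp[OF A_op_positive] by (auto simp: A_form_def)

lemma kernel_A_op_subset_Suc:
  assumes "m \<ge> 1" and "A_op T m x = 0"
  shows "A_op T (Suc m) x = 0"
proof -
  have "A_form (Suc m) x \<le> 0"
    using assms A_form_Suc[of m x] A_form_nonneg[of m "T x"] by (simp add: A_op_eq_0_iff)
  then show ?thesis using A_form_nonneg[of "Suc m" x] by (simp add: A_op_eq_0_iff)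
qed

text \<open>If \<open>A_form (m + 1) x = 0\<close>, then \<open>k \<mapsto> A_form (m + 1) (T\<^sup>k x)\<close> is decreasing, hence zero, so
  \<open>k \<mapsto> A_form m (T\<^sup>k x)\<close> is constant, and this constant is the decrement of the nonnegative
  sequence \<open>k \<mapsto> A_form (m - 1) (T\<^sup>k x)\<close>.\<close>
lemma kernel_A_op_Suc_subset:
  assumes "m \<ge> 2" and "A_op T (Suc m) x = 0"
  shows "A_op T m x = 0"
proof -
  have Suc_m_x: "A_form (Suc m) x = 0" using assms(2) by (simp add: A_form_def)
  have Suc_m: "A_form (Suc m) ((T ^^ k) x) = 0" for k
  proof (induction k)
    case (Suc k)
    have "A_form (Suc (Suc m)) ((T ^^ k) x) \<ge> 0" by (rule A_form_nonneg) simp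
    then have "A_form (Suc m) ((T ^^ Suc k) x) \<le> 0"
      using A_form_Suc[of "Suc m" "(T ^^ k) x"] Suc.IH by simp
    then show ?case using A_form_nonneg[of "Suc m" "(T ^^ Suc k) x"] by simp
  qed (simp add: Suc_m_x)
  have m_const: "A_form m ((T ^^ k) x) = A_form m x" for k
  proof (induction k)
    case (Suc k)
    then show ?case using A_form_Suc[of m "(T ^^ k) x"] Suc_m[of k] by simp
  qed simp
  have "Suc (m - 1) = m" using assms by simp
  then have "A_form (m - 1) ((T ^^ k) x) - A_form (m - 1) ((T ^^ Suc k) x) = A_form m x" for k
    using A_form_Suc[of "m - 1" "(T ^^ k) x"] m_const[of k] by simp
  then have "A_form m x \<le> 0"
    using A_form_nonneg[of "m - 1"] assms
    by (intro nonneg_sequence_constant_decrement[where y="\<lambda>k. A_form (m - 1) ((T ^^ k) x)"]) auto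
  then show ?thesis using A_form_nonneg[of m x] assms by (simp add: A_op_eq_0_iff)
qed

lemma kernel_A_op_Suc:
  assumes "m \<ge> 2"
  shows "A_op T (Suc m) x = 0 \<longleftrightarrow> A_op T m x = 0"
  using kernel_A_op_subset_Suc[of m x] kernel_A_op_Suc_subset[OF assms, of x] assms by auto

lemma kernel_A_op_eq: "n \<ge> 2 \<Longrightarrow> A_op T n x = 0 \<longleftrightarrow> A_op T 2 x = 0"
proof (induction n rule: dec_induct)
  case (step n)
  then show ?case using kernel_A_op_Suc[of n] by simp
qed simp

lemma closure_range_A_op_eq:
  assumes "n \<ge> 2"
  shows "closure (range (A_op T n)) = closure (range (A_op T 2))"
proof -
  interpret An: positive_operator "A_op T n" using A_op_positive assms by unfold_locales simp
  interpret A2: positive_operator "A_op T 2" using A_op_positive by unfold_locales simp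
  show ?thesis using kernel_A_op_eq[OF assms] by (simp add: An.M_eq A2.M_eq)
qed

sublocale A2: positive_operator "A_op T 2"
  by unfold_locales (rule A_op_positive, simp)

text \<open>The compression of \<open>T\<close> to \<open>M\<close> and its adjoint, extended to the whole space through
  \<open>P\<close> rather than by \<open>0\<close> as in \<^const>\<open>compression\<close>.\<close>
definition U :: "'a \<Rightarrow> 'a" where
  "U x = A2.P (T (A2.P x))"

definition U_adj :: "'a \<Rightarrow> 'a" where
  "U_adj x = A2.P (cadjoint T (A2.P x))"

definition kernel_invariant :: bool where
  "kernel_invariant \<longleftrightarrow> (\<forall>x. A_op T 2 x = 0 \<longrightarrow> A_op T 2 (T x) = 0)"

definition A_op_commutes_U :: "nat \<Rightarrow> bool" where
  "A_op_commutes_U n \<longleftrightarrow> (\<forall>x. A_op T n (U x) = U (A_op T n x))"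

lemma cbounded_U: "cbounded U"
  unfolding U_def[abs_def]
  by (rule cbounded_compose[OF A2.cbounded_P cbounded_compose[OF cbounded_T A2.cbounded_P]])

lemma clinear_U: "clinear U"
  by (rule cbounded_clinear[OF cbounded_U])

lemma U_in_M: "U x \<in> A2.M"
  by (simp add: U_def A2.M.orth_proj_in)

lemma U_adj_in_M: "U_adj x \<in> A2.M"
  by (simp add: U_adj_def A2.M.orth_proj_in)

lemma cinner_U: "cinner (U x) y = cinner x (U_adj y)"
  by (simp add: U_def U_adj_def A2.M.orth_proj_self_adjoint cinner_cadjoint[OF cbounded_T])

lemma M_kernel_trivial:
  assumes "x \<in> A2.M" and "A_op T 2 x = 0"
  shows "x = 0"
proof -
  have "cinner x x = 0" using assms by (simp add: A2.M_eq orth_compl_def)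
  then show ?thesis by (simp only: cinner_self_eq_zero)
qed

lemma regular_A_op_iff:
  assumes "n \<ge> 2"
  shows "regular (A_op T n) T \<longleftrightarrow> kernel_invariant \<and> A_op_commutes_U n"
proof -
  interpret An: positive_operator "A_op T n" using A_op_positive assms by unfold_locales simp
  show ?thesis
    unfolding An.regular_iff[OF cbounded_T] closure_range_A_op_eq[OF assms]
    by (simp add: kernel_A_op_eq[OF assms] kernel_invariant_def A_op_commutes_U_def U_def)
qed

lemma P_T_eq_U:
  assumes "kernel_invariant"
  shows "A2.P (T x) = U x"
proof -
  have "A_op T 2 (T (x - A2.P x)) = 0"
    using assms A2.A_minus_P by (simp add: kernel_invariant_def)
  then have "A2.P (T (x - A2.P x)) = 0" by (rule A2.P_eq_0_if_kernel)
  then show ?thesis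
    by (simp add: U_def clinear_diff[OF cbounded_clinear[OF cbounded_T]] clinear_diff[OF A2.clinear_P])
qed

text \<open>The vector \<open>T\<^sup>* A\<^sub>n T x = A\<^sub>n x - A\<^sub>n\<^sub>+\<^sub>1 x\<close> already lies in \<open>M\<close>, so the outer projection
  in \<open>U\<^sup>* A\<^sub>n U x = P T\<^sup>* A\<^sub>n T x\<close> changes nothing.\<close>
lemma A_op_Suc_U:
  assumes "kernel_invariant" and "n \<ge> 2"
  shows "A_op T (Suc n) x = A_op T n x - U_adj (A_op T n (U x))"
proof -
  interpret An: positive_operator "A_op T n" using A_op_positive assms by unfold_locales simp
  interpret An1: positive_operator "A_op T (Suc n)" using A_op_positive assms by unfold_locales simp
  have M_n: "closure (range (A_op T n)) = A2.M" by (rule closure_range_A_op_eq[OF assms(2)])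
  have M_Suc_n: "closure (range (A_op T (Suc n))) = A2.M"
    by (rule closure_range_A_op_eq) (use assms(2) in simp)
  have A_n_T: "A_op T n (T x) = A_op T n (U x)"
    using An.A_P[of "T x"] by (simp add: M_n P_T_eq_U[OF assms(1)])
  have "cadjoint T (A_op T n (U x)) = A_op T n x - A_op T (Suc n) x"
    by (simp add: A_op_Suc[OF cbounded_T] A_n_T)
  also have "\<dots> \<in> A2.M"
    using An.A_in_M[of x] An1.A_in_M[of x] csubspace_diff[OF A2.M.csubspace]
    by (simp add: M_n M_Suc_n)
  finally have "A2.P (cadjoint T (A_op T n (U x))) = cadjoint T (A_op T n (U x))"
    by (rule A2.M.orth_proj_id)
  moreover have "A2.P (A_op T n (U x)) = A_op T n (U x)"
    using An.P_A[of "U x"] by (simp add: M_n)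
  ultimately show ?thesis by (simp add: A_op_Suc[OF cbounded_T] A_n_T U_adj_def)
qed

lemma A_op_commutes_U_adj:
  assumes "n \<ge> 2" and "A_op_commutes_U n"
  shows "A_op T n (U_adj x) = U_adj (A_op T n x)"
proof (rule cinner_eqI)
  interpret An: positive_operator "A_op T n" using A_op_positive assms by unfold_locales simp
  fix z
  have "cinner z (A_op T n (U_adj x)) = cinner (U (A_op T n z)) x"
    by (simp add: An.self_adjoint cinner_U)
  also have "\<dots> = cinner (A_op T n (U z)) x"
    using assms(2) by (simp add: A_op_commutes_U_def)
  also have "\<dots> = cinner z (U_adj (A_op T n x))"
    by (simp add: An.self_adjoint cinner_U)
  finally show "cinner z (A_op T n (U_adj x)) = cinner z (U_adj (A_op T n x))" .
qed

lemma quasinormal_iff: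
  "quasinormal_on A2.M (compression A2.M T) \<longleftrightarrow> (\<forall>x. U (U_adj (U x)) = U_adj (U (U x)))"
proof -
  have compression: "compression A2.M T x = U x" if "x \<in> A2.M" for x
    using that by (simp add: compression_def U_def A2.M.orth_proj_id)
  have adjoint: "adjoint_on A2.M (compression A2.M T) y = U_adj y" if "y \<in> A2.M" for y
    using that by (simp add: A2.M.adjoint_on_compression[OF cbounded_T] U_adj_def A2.M.orth_proj_id)
  have U_P: "U (A2.P x) = U x" for x
    by (simp add: U_def A2.M.orth_proj_idem)
  show ?thesis
  proof
    assume qn: "quasinormal_on A2.M (compression A2.M T)"
    show "\<forall>x. U (U_adj (U x)) = U_adj (U (U x))"
    proof
      fix x
      have "U (U_adj (U (A2.P x))) = U_adj (U (U (A2.P x)))"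
        using qn A2.M.orth_proj_in[of x]
        by (simp add: quasinormal_on_def compression adjoint U_in_M U_adj_in_M)
      then show "U (U_adj (U x)) = U_adj (U (U x))" by (simp only: U_P)
    qed
  qed (simp add: quasinormal_on_def compression adjoint U_in_M U_adj_in_M)
qed

lemma regular_2_3_imp_quasinormal:
  assumes "regular (A_op T 2) T" and "regular (A_op T 3) T"
  shows "quasinormal_on A2.M (compression A2.M T)"
proof -
  have inv: "kernel_invariant" and comm_2: "A_op_commutes_U 2" and comm_3: "A_op_commutes_U 3"
    using assms regular_A_op_iff[of 2] regular_A_op_iff[of 3] by auto
  have A_3: "A_op T 3 y = A_op T 2 y - A_op T 2 (U_adj (U y))" for y
    using A_op_Suc_U[OF inv, of 2 y] A_op_commutes_U_adj[OF _ comm_2, of "U y"]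
    by (simp add: numeral_3_eq_3)
  have "U (U_adj (U x)) = U_adj (U (U x))" for x
  proof -
    have "A_op T 2 (U_adj (U (U x))) = U (A_op T 2 (U_adj (U x)))"
      using comm_3 comm_2
      by (simp add: A_op_commutes_U_def A_3 clinear_diff[OF clinear_U])
    also have "\<dots> = A_op T 2 (U (U_adj (U x)))"
      using comm_2 by (simp add: A_op_commutes_U_def)
    finally have "A_op T 2 (U_adj (U (U x)) - U (U_adj (U x))) = 0"
      by (simp add: clinear_diff[OF A2.clinear])
    moreover have "U_adj (U (U x)) - U (U_adj (U x)) \<in> A2.M"
      using U_adj_in_M U_in_M csubspace_diff[OF A2.M.csubspace] by blast
    ultimately show ?thesis using M_kernel_trivial by fastforce
  qed
  then show ?thesis by (simp add: quasinormal_iff)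
qed

lemma norm_le_on_closure:
  assumes "continuous_on UNIV f" and "\<And>y. y \<in> S \<Longrightarrow> norm (f y) \<le> norm y" and "x \<in> closure S"
  shows "norm (f x) \<le> norm x"
proof -
  have "closed {x. norm (f x) \<le> norm x}"
    by (rule closed_Collect_le[OF continuous_on_norm[OF assms(1)] continuous_on_norm[OF continuous_on_id]])
  then have "closure S \<subseteq> {x. norm (f x) \<le> norm x}"
    using assms(2) by (intro closure_minimal) auto
  with assms(3) show ?thesis by blast
qed

text \<open>\<open>A\<^sub>3 \<ge> 0\<close> says \<open>\<parallel>A\<^sub>2\<^sup>1\<^sup>/\<^sup>2 T y\<parallel> \<le> \<parallel>A\<^sub>2\<^sup>1\<^sup>/\<^sup>2 y\<parallel>\<close>, and regularity turns \<open>A\<^sub>2\<^sup>1\<^sup>/\<^sup>2 T\<close> into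
  \<open>P T A\<^sub>2\<^sup>1\<^sup>/\<^sup>2\<close>; the range of \<open>A\<^sub>2\<^sup>1\<^sup>/\<^sup>2\<close> is dense in \<open>M\<close>.\<close>
lemma regular_2_imp_contraction:
  assumes "regular (A_op T 2) T"
  shows "contraction_on A2.M (compression A2.M T)"
proof -
  have "norm (A2.P (T (A2.R y))) \<le> norm (A2.R y)" for y
  proof -
    have "A_form 2 (T y) \<le> A_form 2 y"
      using A_form_nonneg[of "Suc 2" y] A_form_Suc[of 2 y] by simp
    then have "(norm (A2.R (T y)))\<^sup>2 \<le> (norm (A2.R y))\<^sup>2"
      by (simp add: A_form_def A2.form_eq_norm_R)
    then have "norm (A2.R (T y)) \<le> norm (A2.R y)" by (rule power2_le_imp_le) simp
    then show ?thesis by (simp add: A2.regular_imp_R_T[OF assms])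
  qed
  moreover have "continuous_on UNIV (\<lambda>x. A2.P (T x))"
    by (rule cbounded_continuous_on[OF cbounded_compose[OF A2.cbounded_P cbounded_T]])
  ultimately have "norm (A2.P (T x)) \<le> norm x" if "x \<in> A2.M" for x
    using that A2.closure_range_R by (auto intro: norm_le_on_closure[of _ "range A2.R"])
  then show ?thesis by (simp add: contraction_on_def compression_def)
qed

text \<open>Quasinormality \<open>U U\<^sup>* U = U\<^sup>* U U\<close> lets \<open>U\<close> pass through \<open>U\<^sup>* A\<^sub>n U\<close>, so
  \<open>A\<^sub>n\<^sub>+\<^sub>1 = A\<^sub>n - U\<^sup>* A\<^sub>n U\<close> commutes with \<open>U\<close> whenever \<open>A\<^sub>n\<close> does.\<close>
lemma quasinormal_imp_regular:
  assumes "regular (A_op T 2) T" and "quasinormal_on A2.M (compression A2.M T)" and "n \<ge> 2"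
  shows "regular (A_op T n) T"
proof -
  have inv: "kernel_invariant" and comm_2: "A_op_commutes_U 2"
    using assms(1) regular_A_op_iff[of 2] by auto
  have qn: "U (U_adj (U x)) = U_adj (U (U x))" for x
    using assms(2) quasinormal_iff by blast
  have "A_op_commutes_U n"
    using assms(3)
  proof (induction n rule: dec_induct)
    case (step n)
    have "A_op T (Suc n) (U x) = U (A_op T (Suc n) x)" for x
    proof -
      have "A_op T (Suc n) (U x) = A_op T n (U x) - A_op T n (U (U_adj (U x)))"
        by (simp add: A_op_Suc_U[OF inv step.hyps(1)] A_op_commutes_U_adj[OF step.hyps(1) step.IH] qn)
      also have "\<dots> = U (A_op T (Suc n) x)"
        using step.IH
        by (simp add: A_op_Suc_U[OF inv step.hyps(1)] A_op_commutes_U_adj[OF step.hyps(1) step.IH]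
            A_op_commutes_U_def clinear_diff[OF clinear_U])
      finally show ?thesis .
    qed
    then show ?case by (simp add: A_op_commutes_U_def)
  qed (rule comm_2)
  with inv assms(3) show ?thesis by (simp add: regular_A_op_iff)
qed

end

theorem theorem4p5:
  fixes T :: "'a::chilbert_space \<Rightarrow> 'a"
  assumes "cbounded T"
    and "regular (Delta T) T"
    and "completely_hyperexpansive T"
  shows "let M = closure (range (A_op T 2));
             c1 = (\<forall>n::nat\<ge>2. regular (A_op T n) T);
             c2 = (regular (A_op T 2) T \<and> regular (A_op T 3) T);
             c3 = (regular (A_op T 2) T \<and> quasinormal_on M (compression M T)
                   \<and> contraction_on M (compression M T))
         in (c1 \<longleftrightarrow> c2) \<and> (c2 \<longleftrightarrow> c3) \<and>
            ((c1 \<or> c2 \<or> c3) \<longrightarrow> (\<forall>n::nat\<ge>3. kernel (A_op T 2) = kernel (A_op T n)))"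
proof -
  interpret completely_hyperexpansive_op T by unfold_locales (rule assms(3))
  have c2_iff_c3: "regular (A_op T 2) T \<and> regular (A_op T 3) T \<longleftrightarrow>
      regular (A_op T 2) T \<and> quasinormal_on A2.M (compression A2.M T) \<and>
      contraction_on A2.M (compression A2.M T)"
    using regular_2_3_imp_quasinormal regular_2_imp_contraction quasinormal_imp_regular[of 3] by auto
  moreover have "(\<forall>n::nat\<ge>2. regular (A_op T n) T) \<longleftrightarrow> regular (A_op T 2) T \<and> regular (A_op T 3) T"
    using c2_iff_c3 quasinormal_imp_regular by auto
  moreover have "kernel (A_op T 2) = kernel (A_op T n)" if "n \<ge> 3" for n
    using kernel_A_op_eq[of n] that by (auto simp: kernel_def)
  ultimately show ?thesis by (simp add: Let_def)
qed

end
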